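(* Let $G$ be a finite group acting on a complex abelian variety $A$, and let $H\le G$. Let $H_1=H,H_2,\dots,H_s$ be the double cosets of $H$ in $G$, and $q_i:=\frac1{|H|}\sum_{y\in H_i}y$. Let $V$ be an irreducible complex representation of $G$ with $\dim V^H=1$ and $\chi_V$ rational-valued, and let $W$ be the associated irreducible rational representation. Then each $\chi_V(q_i)$ is an integer, each $q_i$ is an endomorphism of $A_H$, and $$A_{H,\widetilde W}=\{z\in A_H:\ q_i(z)=\chi_V(q_i)\,z\ \text{ for } i=1,\dots,s\}_0.$$
   Context: The action of $G$ on $A$ induces an algebra homomorphism $\mathbb{Q}[G]\to\mathrm{End}_{\mathbb Q}(A)$. Elements of $\mathbb{Q}[G]$ are identified with their images. For $\alpha\in\mathrm{End}_{\mathbb Q}(A)$, take any positive integer $n$ with $n\alpha\in\mathrm{End}(A)$ and set $\mathrm{Im}(\alpha):=\mathrm{Im}(n\alpha)$. This does not depend on $n$. Set $p_H:=\frac1{|H|}\sum_{h\in H}h$ and $A_H:=\mathrm{Im}(p_H)$; $p_H$ acts as the identity on $A_H$. $\chi_V$ is extended linearly to $\mathbb{Q}[G]$. Define $e_W:=\frac{\dim V}{|G|}\sum_{g}\chi_V(g^{-1})g$, $f_{H,\widetilde W}:=p_He_W$, and $A_{H,\widetilde W}:=\mathrm{Im}(f_{H,\widetilde W})$. $\{z\in A_H:\dots\}_0$ denotes the connected component containing $0$ of the indicated subset. *)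

theory Defs
  imports "HOL-Analysis.Analysis" "HOL-Algebra.Coset"
begin

text \<open>A lattice in V = complex^'n: the Z-span of an R-basis of V (viewed as real space R^(2n)).\<close>
definition is_lattice :: "(complex^'n) set \<Rightarrow> bool" where
  "is_lattice L \<longleftrightarrow> (\<exists>B. finite B \<and> independent B \<and> card B = DIM(complex^'n) \<and>
      L = {(\<Sum>b\<in>B. of_int (c b) *\<^sub>R b) | c. True})"

definition has_polarization :: "(complex^'n) set \<Rightarrow> bool" where
  "has_polarization L \<longleftrightarrow> (\<exists>E :: complex^'n \<Rightarrow> complex^'n \<Rightarrow> complex.
      (\<forall>x y z. E (x + y) z = E x z + E y z) \<and>
      (\<forall>c x y. E (c *s x) y = c * E x y) \<and>
      (\<forall>x y. E y x = cnj (E x y)) \<and>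
      (\<forall>x. x \<noteq> 0 \<longrightarrow> Re (E x x) > 0) \<and>
      (\<forall>l\<in>L. \<forall>m\<in>L. Im (E l m) \<in> \<int>))"

definition abelian_variety :: "(complex^'n) set \<Rightarrow> bool" where
  "abelian_variety L \<longleftrightarrow> is_lattice L \<and> has_polarization L"

text \<open>Points of A = V/L are the cosets x + L.\<close>
definition tpt :: "(complex^'n) set \<Rightarrow> complex^'n \<Rightarrow> (complex^'n) set" where
  "tpt L x = (\<lambda>l. x + l) ` L"

definition torus_top :: "(complex^'n) set \<Rightarrow> (complex^'n) set topology" where
  "torus_top L = topology (\<lambda>U. U \<subseteq> range (tpt L) \<and> open (tpt L -` U))"

text \<open>Action of G on A by automorphisms, given by analytic representations M g (C-linear, preserving L).\<close>
definition group_acts_on_av ::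
  "('g, 'b) monoid_scheme \<Rightarrow> (complex^'n) set \<Rightarrow> ('g \<Rightarrow> complex^'n^'n) \<Rightarrow> bool" where
  "group_acts_on_av G L M \<longleftrightarrow>
     (\<forall>g\<in>carrier G. \<forall>h\<in>carrier G. M (g \<otimes>\<^bsub>G\<^esub> h) = M g ** M h) \<and>
     M \<one>\<^bsub>G\<^esub> = mat 1 \<and>
     (\<forall>g\<in>carrier G. \<forall>l\<in>L. M g *v l \<in> L)"

text \<open>The image of an element sum_g a_g g of C[G] (here: Q[G]) in End_Q(A), acting on V.\<close>
definition grp_alg_map ::
  "('g, 'b) monoid_scheme \<Rightarrow> ('g \<Rightarrow> complex^'n^'n) \<Rightarrow> ('g \<Rightarrow> complex) \<Rightarrow> complex^'n \<Rightarrow> complex^'n" where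
  "grp_alg_map G M a = (\<lambda>x. \<Sum>g\<in>carrier G. a g *s (M g *v x))"

text \<open>Im(alpha) := Im(n alpha) for a positive n with n alpha in End(A), as a subset of A.\<close>
definition end_denom :: "(complex^'n) set \<Rightarrow> (complex^'n \<Rightarrow> complex^'n) \<Rightarrow> nat" where
  "end_denom L \<alpha> = (LEAST n. n > 0 \<and> (\<forall>l\<in>L. of_nat n *s \<alpha> l \<in> L))"

definition av_image :: "(complex^'n) set \<Rightarrow> (complex^'n \<Rightarrow> complex^'n) \<Rightarrow> (complex^'n) set set" where
  "av_image L \<alpha> = tpt L ` range (\<lambda>x. of_nat (end_denom L \<alpha>) *s \<alpha> x)"

definition is_rep :: "('g, 'b) monoid_scheme \<Rightarrow> ('g \<Rightarrow> complex^'m^'m) \<Rightarrow> bool" where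
  "is_rep G \<rho> \<longleftrightarrow> (\<forall>g\<in>carrier G. \<forall>h\<in>carrier G. \<rho> (g \<otimes>\<^bsub>G\<^esub> h) = \<rho> g ** \<rho> h) \<and>
                   \<rho> \<one>\<^bsub>G\<^esub> = mat 1"

definition irreducible_rep :: "('g, 'b) monoid_scheme \<Rightarrow> ('g \<Rightarrow> complex^'m^'m) \<Rightarrow> bool" where
  "irreducible_rep G \<rho> \<longleftrightarrow> is_rep G \<rho> \<and>
     (\<forall>S. vec.subspace S \<and> (\<forall>g\<in>carrier G. \<forall>v\<in>S. \<rho> g *v v \<in> S) \<longrightarrow> S = {0} \<or> S = UNIV)"

definition fixed_space :: "'g set \<Rightarrow> ('g \<Rightarrow> complex^'m^'m) \<Rightarrow> (complex^'m) set" where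
  "fixed_space H \<rho> = {v. \<forall>h\<in>H. \<rho> h *v v = v}"

definition character :: "('g \<Rightarrow> complex^'m^'m) \<Rightarrow> 'g \<Rightarrow> complex" where
  "character \<rho> g = trace (\<rho> g)"

definition double_cosets :: "('g, 'b) monoid_scheme \<Rightarrow> 'g set \<Rightarrow> 'g set set" where
  "double_cosets G H = {(H #>\<^bsub>G\<^esub> x) <#>\<^bsub>G\<^esub> H | x. x \<in> carrier G}"

text \<open>p_H = (1/|H|) sum_{h in H} h, and q_D = (1/|H|) sum_{y in D} y.\<close>
definition avg_map :: "('g, 'b) monoid_scheme \<Rightarrow> ('g \<Rightarrow> complex^'n^'n) \<Rightarrow> 'g set \<Rightarrow> 'g set \<Rightarrow> complex^'n \<Rightarrow> complex^'n" where
  "avg_map G M H D = grp_alg_map G M (\<lambda>g. if g \<in> D then 1 / of_nat (card H) else 0)"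

definition eW_map :: "('g, 'b) monoid_scheme \<Rightarrow> ('g \<Rightarrow> complex^'n^'n) \<Rightarrow> ('g \<Rightarrow> complex^'m^'m) \<Rightarrow> complex^'n \<Rightarrow> complex^'n" where
  "eW_map G M \<rho> = grp_alg_map G M
     (\<lambda>g. of_nat CARD('m) / of_nat (card (carrier G)) * character \<rho> (inv\<^bsub>G\<^esub> g))"

text \<open>chi_V extended linearly: chi_V(q_D).\<close>
definition chi_avg :: "('g \<Rightarrow> complex^'m^'m) \<Rightarrow> 'g set \<Rightarrow> 'g set \<Rightarrow> complex" where
  "chi_avg \<rho> H D = (1 / of_nat (card H)) * (\<Sum>y\<in>D. character \<rho> y)"

end

theory Submission
  imports Defs "Jordan_Normal_Form.Char_Poly"
begin

hide_const (open) Matrix.mat Matrix.vec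
no_notation Matrix.vec_index (infixl "$" 100)
lemmas cvec_eq_iff = Finite_Cartesian_Product.vec_eq_iff

text \<open>
  Everything happens in the group algebra. For a double coset \<open>D\<close> one has
  \<open>p\<^sub>H q\<^sub>D = q\<^sub>D = q\<^sub>D p\<^sub>H\<close>; on \<open>V\<close>, where the \<open>H\<close>-invariants form a line, this forces
  \<open>q\<^sub>D = \<chi>\<^sub>V(q\<^sub>D) p\<^sub>H\<close>. Hence \<open>\<chi>\<^sub>V(q\<^sub>D)\<close> multiplies the spherical function \<open>k \<mapsto> \<chi>\<^sub>V(k p\<^sub>H)\<close>
  into the \<open>\<int>\<close>-span of its values, so as a rational number it is an integer.

  The element \<open>p\<^sub>H e\<^sub>W p\<^sub>H\<close> is \<open>H\<close>-bi-invariant, hence a combination of the \<open>q\<^sub>D\<close>, so it acts by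
  one and the same scalar on the common eigenvectors \<open>q\<^sub>D x = \<chi>\<^sub>V(q\<^sub>D) x\<close> of every
  representation; evaluating on \<open>V\<close>, where \<open>e\<^sub>W\<close> is the identity, shows the scalar is \<open>1\<close>. So
  the image of \<open>p\<^sub>H e\<^sub>W\<close> is exactly this eigenvector locus \<open>K\<close>.

  Finally the maps \<open>|H| (q\<^sub>D - \<chi>\<^sub>V(q\<^sub>D))\<close> have integral coefficients, so they preserve the
  lattice, and by discreteness they vanish on lattice vectors close to \<open>0\<close>. This makes the image
  of \<open>K\<close> open and closed in the torus locus of the theorem; being connected, it is the
  component of \<open>0\<close>.
\<close>

locale finite_group = group G for G :: "('g, 'b) monoid_scheme" (structure) +
  assumes finite_carrier: "finite (carrier G)"
begin

lemma card_carrier_pos: "card (carrier G) > 0"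
  using finite_carrier one_closed card_gt_0_iff by blast

lemma inv_mult_cancel [simp]: "x \<in> carrier G \<Longrightarrow> y \<in> carrier G \<Longrightarrow> inv x \<otimes> (x \<otimes> y) = y"
  by (simp add: m_assoc[symmetric])

lemma mult_inv_cancel [simp]: "x \<in> carrier G \<Longrightarrow> y \<in> carrier G \<Longrightarrow> x \<otimes> (inv x \<otimes> y) = y"
  by (simp add: m_assoc[symmetric])

lemma sum_lmult: "g \<in> carrier G \<Longrightarrow> (\<Sum>k\<in>carrier G. f (g \<otimes> k)) = (\<Sum>k\<in>carrier G. f k)"
  by (rule sum.reindex_bij_witness[where i="\<lambda>k. inv g \<otimes> k" and j="\<lambda>k. g \<otimes> k"]) auto

lemma sum_inv: "(\<Sum>k\<in>carrier G. f (inv k)) = (\<Sum>k\<in>carrier G. f k)"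
  by (rule sum.reindex_bij_witness[where i="\<lambda>k. inv k" and j="\<lambda>k. inv k"]) auto

end

section \<open>Double cosets\<close>

locale finite_subgroup = finite_group G for G :: "('g, 'b) monoid_scheme" (structure) +
  fixes H :: "'g set"
  assumes subgroup_H: "subgroup H G"
begin

lemma H_subset: "H \<subseteq> carrier G"
  using subgroup_H subgroup.subset by blast

lemma one_in_H: "\<one> \<in> H"
  using subgroup_H subgroup.one_closed by blast

lemma H_mult: "h \<in> H \<Longrightarrow> h' \<in> H \<Longrightarrow> h \<otimes> h' \<in> H"
  by (rule subgroup.m_closed[OF subgroup_H])

lemma H_inv: "h \<in> H \<Longrightarrow> inv h \<in> H"
  by (rule subgroup.m_inv_closed[OF subgroup_H])

lemma H_carrier: "h \<in> H \<Longrightarrow> h \<in> carrier G"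
  using H_subset by blast

lemma finite_H: "finite H"
  using H_subset finite_carrier finite_subset by blast

lemma card_H_pos: "card H > 0"
  using finite_H one_in_H card_gt_0_iff by blast

definition double_coset :: "'g \<Rightarrow> 'g set" where
  "double_coset x = (H #> x) <#> H"

lemma double_coset_iff: "k \<in> double_coset x \<longleftrightarrow> (\<exists>h\<in>H. \<exists>h'\<in>H. k = h \<otimes> x \<otimes> h')"
  unfolding double_coset_def r_coset_def set_mult_def by auto

lemma double_cosets_eq: "double_cosets G H = double_coset ` carrier G"
  unfolding double_cosets_def double_coset_def by auto

lemma double_coset_self: "x \<in> carrier G \<Longrightarrow> x \<in> double_coset x"
  unfolding double_coset_iff using one_in_H by (intro bexI[of _ \<one>]) auto

lemma double_coset_repr_independence:
  assumes x: "x \<in> carrier G" and y: "y \<in> double_coset x"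
  shows "double_coset y = double_coset x"
proof -
  from y obtain a b where a: "a \<in> H" and b: "b \<in> H" and y_eq: "y = a \<otimes> x \<otimes> b"
    by (auto simp: double_coset_iff)
  have "k \<in> double_coset x" if "k \<in> double_coset y" for k
  proof -
    from that obtain c d where c: "c \<in> H" and d: "d \<in> H" and "k = c \<otimes> y \<otimes> d"
      by (auto simp: double_coset_iff)
    hence "k = (c \<otimes> a) \<otimes> x \<otimes> (b \<otimes> d)" using a b c d x y_eq by (simp add: m_assoc H_carrier)
    thus ?thesis using a b c d by (auto simp: double_coset_iff intro!: H_mult)
  qed
  moreover have "k \<in> double_coset y" if "k \<in> double_coset x" for k
  proof -
    from that obtain c d where c: "c \<in> H" and d: "d \<in> H" and k: "k = c \<otimes> x \<otimes> d"
      by (auto simp: double_coset_iff)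
    have "(c \<otimes> inv a) \<otimes> y \<otimes> (inv b \<otimes> d) = c \<otimes> (inv a \<otimes> a) \<otimes> x \<otimes> (b \<otimes> inv b) \<otimes> d"
      using a b c d x y_eq by (simp add: m_assoc H_carrier)
    also have "\<dots> = k" using a b c d x k by (simp add: H_carrier)
    finally show ?thesis using a b c d by (auto simp: double_coset_iff intro!: H_mult H_inv)
  qed
  ultimately show ?thesis by blast
qed

lemma double_cosets_subset_carrier: "D \<in> double_cosets G H \<Longrightarrow> D \<subseteq> carrier G"
  by (auto simp: double_cosets_eq double_coset_iff H_carrier)

lemma finite_double_cosets: "finite (double_cosets G H)"
  using finite_carrier by (simp add: double_cosets_eq)

lemma finite_double_coset: "D \<in> double_cosets G H \<Longrightarrow> finite D"
  using double_cosets_subset_carrier finite_carrier finite_subset by blast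

lemma double_cosets_disjoint:
  assumes "D \<in> double_cosets G H" "E \<in> double_cosets G H" "D \<noteq> E"
  shows "D \<inter> E = {}"
proof (rule ccontr)
  assume "D \<inter> E \<noteq> {}"
  then obtain k where k: "k \<in> D" "k \<in> E" by blast
  from assms obtain x y where "x \<in> carrier G" "D = double_coset x" "y \<in> carrier G" "E = double_coset y"
    by (auto simp: double_cosets_eq)
  with k assms show False using double_coset_repr_independence by metis
qed

lemma Union_double_cosets: "\<Union> (double_cosets G H) = carrier G"
  using double_cosets_subset_carrier double_coset_self by (auto simp: double_cosets_eq)

lemma sum_double_cosets: "(\<Sum>k\<in>carrier G. f k) = (\<Sum>D\<in>double_cosets G H. \<Sum>k\<in>D. f k)"
  using sum.Union_disjoint[of "double_cosets G H" f] finite_double_cosets finite_double_coset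
    double_cosets_disjoint by (simp add: Union_double_cosets)

lemma double_cosets_conj:
  assumes D: "D \<in> double_cosets G H" and y: "y \<in> D" and k: "k \<in> D"
  shows "\<exists>h\<in>H. \<exists>h'\<in>H. k = h \<otimes> y \<otimes> h'"
proof -
  from D obtain x where "x \<in> carrier G" "D = double_coset x" by (auto simp: double_cosets_eq)
  with y k show ?thesis using double_coset_repr_independence by (metis double_coset_iff)
qed

lemma double_cosets_lmult:
  assumes D: "D \<in> double_cosets G H" and y: "y \<in> D" and h: "h \<in> H"
  shows "h \<otimes> y \<in> D"
proof -
  from D obtain x where x: "x \<in> carrier G" "D = double_coset x" by (auto simp: double_cosets_eq)
  with y obtain a b where a: "a \<in> H" and b: "b \<in> H" and y_eq: "y = a \<otimes> x \<otimes> b"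
    by (auto simp: double_coset_iff)
  have "h \<otimes> y = (h \<otimes> a) \<otimes> x \<otimes> b" using a b h x y_eq by (simp add: m_assoc H_carrier)
  thus ?thesis using a b x h by (auto simp: double_coset_iff intro!: H_mult)
qed

lemma double_cosets_rmult:
  assumes D: "D \<in> double_cosets G H" and y: "y \<in> D" and h: "h \<in> H"
  shows "y \<otimes> h \<in> D"
proof -
  from D obtain x where x: "x \<in> carrier G" "D = double_coset x" by (auto simp: double_cosets_eq)
  with y obtain a b where a: "a \<in> H" and b: "b \<in> H" and y_eq: "y = a \<otimes> x \<otimes> b"
    by (auto simp: double_coset_iff)
  have "y \<otimes> h = a \<otimes> x \<otimes> (b \<otimes> h)" using a b h x y_eq by (simp add: m_assoc H_carrier)
  thus ?thesis using a b x h by (auto simp: double_coset_iff intro!: H_mult)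
qed

lemma double_cosets_lmult_iff:
  assumes D: "D \<in> double_cosets G H" and k: "k \<in> carrier G" and h: "h \<in> H"
  shows "h \<otimes> k \<in> D \<longleftrightarrow> k \<in> D"
proof
  assume "h \<otimes> k \<in> D"
  hence "inv h \<otimes> (h \<otimes> k) \<in> D" using double_cosets_lmult[OF D _ H_inv[OF h]] by blast
  thus "k \<in> D" using k h H_carrier by simp
qed (rule double_cosets_lmult[OF D _ h])

lemma double_cosets_rmult_iff:
  assumes D: "D \<in> double_cosets G H" and k: "k \<in> carrier G" and h: "h \<in> H"
  shows "k \<otimes> h \<in> D \<longleftrightarrow> k \<in> D"
proof
  assume "k \<otimes> h \<in> D"
  hence "k \<otimes> h \<otimes> inv h \<in> D" using double_cosets_rmult[OF D _ H_inv[OF h]] by blast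
  thus "k \<in> D" using k h H_carrier by (simp add: m_assoc)
qed (rule double_cosets_rmult[OF D _ h])

lemma subgroup_in_double_cosets: "H \<in> double_cosets G H"
proof -
  have "double_coset \<one> = H"
  proof
    show "double_coset \<one> \<subseteq> H" by (auto simp: double_coset_iff H_carrier H_mult)
    show "H \<subseteq> double_coset \<one>"
      using one_in_H H_carrier by (force simp: double_coset_iff)
  qed
  thus ?thesis unfolding double_cosets_eq by (metis image_eqI one_closed)
qed

end

section \<open>Operators of the group algebra\<close>

lemma grp_alg_map_add: "grp_alg_map G R a (x + y) = grp_alg_map G R a x + grp_alg_map G R a y"
  by (simp add: grp_alg_map_def matrix_vector_right_distrib vec.scale_right_distrib sum.distrib)

lemma grp_alg_map_scale: "grp_alg_map G R a (c *s x) = c *s grp_alg_map G R a x"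
  by (simp add: grp_alg_map_def vec.scale vec.scale_sum_right vec.scale_scale mult.commute)

lemma grp_alg_map_diff: "grp_alg_map G R a (x - y) = grp_alg_map G R a x - grp_alg_map G R a y"
  by (simp add: grp_alg_map_def matrix_vector_mult_diff_distrib vec.scale_right_diff_distrib
      sum_subtractf)

lemma grp_alg_map_zero: "grp_alg_map G R a 0 = 0"
  by (simp add: grp_alg_map_def)

lemma grp_alg_map_sum: "grp_alg_map G R a (\<Sum>i\<in>S. f i) = (\<Sum>i\<in>S. grp_alg_map G R a (f i))"
  by (induct S rule: infinite_finite_induct) (simp_all add: grp_alg_map_add grp_alg_map_zero)

lemma grp_alg_map_coeff_scale: "grp_alg_map G R (\<lambda>g. c * a g) x = c *s grp_alg_map G R a x"
  by (simp add: grp_alg_map_def vec.scale_sum_right vec.scale_scale)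

lemma grp_alg_map_cong:
  "(\<And>g. g \<in> carrier G \<Longrightarrow> a g = b g) \<Longrightarrow> grp_alg_map G R a x = grp_alg_map G R b x"
  by (simp add: grp_alg_map_def)

definition grp_alg_matrix ::
  "('g, 'b) monoid_scheme \<Rightarrow> ('g \<Rightarrow> complex^'n^'n) \<Rightarrow> ('g \<Rightarrow> complex) \<Rightarrow> complex^'n^'n" where
  "grp_alg_matrix G R a = (\<chi> i j. \<Sum>g\<in>carrier G. a g * R g $ i $ j)"

lemma grp_alg_matrix_mult_vec: "grp_alg_matrix G R a *v x = grp_alg_map G R a x"
  by (simp add: cvec_eq_iff grp_alg_matrix_def grp_alg_map_def matrix_vector_mult_def
      sum_component sum_distrib_left sum_distrib_right mult.assoc sum.swap[of _ UNIV])

lemma trace_mult_grp_alg_matrix: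
  "trace (A ** grp_alg_matrix G R a) = (\<Sum>g\<in>carrier G. a g * trace (A ** R g))"
  by (simp add: trace_def matrix_matrix_mult_def grp_alg_matrix_def sum_distrib_left
      sum_distrib_right mult.left_commute sum.swap[of _ "carrier G"])

context finite_group
begin

lemma rep_mult: "is_rep G R \<Longrightarrow> g \<in> carrier G \<Longrightarrow> h \<in> carrier G \<Longrightarrow> R (g \<otimes> h) = R g ** R h"
  unfolding is_rep_def by blast

lemma rep_one: "is_rep G R \<Longrightarrow> R \<one> = mat 1"
  unfolding is_rep_def by blast

lemma rep_mult_vec:
  "is_rep G R \<Longrightarrow> g \<in> carrier G \<Longrightarrow> h \<in> carrier G \<Longrightarrow> R g *v (R h *v x) = R (g \<otimes> h) *v x"
  by (simp add: rep_mult matrix_vector_mul_assoc)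

definition convolution :: "('g \<Rightarrow> complex) \<Rightarrow> ('g \<Rightarrow> complex) \<Rightarrow> 'g \<Rightarrow> complex" where
  "convolution a b k = (\<Sum>g\<in>carrier G. a g * b (inv g \<otimes> k))"

lemma grp_alg_map_convolution:
  assumes R: "is_rep G R"
  shows "grp_alg_map G R a (grp_alg_map G R b x) = grp_alg_map G R (convolution a b) x"
proof -
  have "grp_alg_map G R a (grp_alg_map G R b x)
      = (\<Sum>g\<in>carrier G. \<Sum>h\<in>carrier G. (a g * b h) *s (R (g \<otimes> h) *v x))"
    by (simp add: grp_alg_map_def vec.sum vec.scale vec.scale_sum_right vec.scale_scale
        rep_mult_vec[OF R])
  also have "\<dots> = (\<Sum>g\<in>carrier G. \<Sum>k\<in>carrier G. (a g * b (inv g \<otimes> k)) *s (R k *v x))"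
  proof (rule sum.cong[OF refl])
    fix g assume g: "g \<in> carrier G"
    show "(\<Sum>h\<in>carrier G. (a g * b h) *s (R (g \<otimes> h) *v x)) =
          (\<Sum>k\<in>carrier G. (a g * b (inv g \<otimes> k)) *s (R k *v x))"
      using sum_lmult[OF inv_closed[OF g], of "\<lambda>h. (a g * b h) *s (R (g \<otimes> h) *v x)"] g
      by simp
  qed
  also have "\<dots> = grp_alg_map G R (convolution a b) x"
    by (subst sum.swap) (simp add: grp_alg_map_def convolution_def vec.scale_sum_left)
  finally show ?thesis .
qed

end

section \<open>The averaging operators \<open>p\<^sub>H\<close> and \<open>q\<^sub>D\<close>\<close>

context finite_subgroup
begin

definition avg_coeff :: "'g set \<Rightarrow> 'g \<Rightarrow> complex" where
  "avg_coeff D g = (if g \<in> D then 1 / of_nat (card H) else 0)"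

lemma avg_map_eq: "avg_map G R H D = grp_alg_map G R (avg_coeff D)"
  by (simp add: avg_map_def avg_coeff_def[abs_def])

lemma sum_avg_coeff:
  assumes "D \<subseteq> carrier G"
  shows "(\<Sum>g\<in>carrier G. avg_coeff D g * F g) = 1 / of_nat (card H) * (\<Sum>g\<in>D. F g)"
proof -
  have "(\<Sum>g\<in>carrier G. avg_coeff D g * F g) = (\<Sum>g\<in>carrier G \<inter> D. 1 / of_nat (card H) * F g)"
    by (subst sum.inter_restrict[OF finite_carrier]) (auto simp: avg_coeff_def intro!: sum.cong)
  also have "carrier G \<inter> D = D" using assms by blast
  finally show ?thesis by (simp add: sum_distrib_left)
qed

lemma grp_alg_map_avg_coeff:
  assumes "D \<subseteq> carrier G"
  shows "grp_alg_map G R (avg_coeff D) x = (1 / of_nat (card H)) *s (\<Sum>g\<in>D. R g *v x)"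
proof -
  have "grp_alg_map G R (avg_coeff D) x
      = (\<Sum>g\<in>carrier G \<inter> D. (1 / of_nat (card H)) *s (R g *v x))"
    unfolding grp_alg_map_def
    by (subst sum.inter_restrict[OF finite_carrier]) (auto simp: avg_coeff_def intro!: sum.cong)
  also have "carrier G \<inter> D = D" using assms by blast
  finally show ?thesis by (simp add: vec.scale_sum_right)
qed

lemma convolution_avg_coeff_left:
  "k \<in> carrier G \<Longrightarrow> convolution (avg_coeff H) b k = 1 / of_nat (card H) * (\<Sum>h\<in>H. b (inv h \<otimes> k))"
  unfolding convolution_def by (rule sum_avg_coeff[OF H_subset])

lemma convolution_avg_coeff_right:
  assumes k: "k \<in> carrier G"
  shows "convolution a (avg_coeff H) k = 1 / of_nat (card H) * (\<Sum>h\<in>H. a (k \<otimes> inv h))"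
proof -
  have "convolution a (avg_coeff H) k
      = (\<Sum>g\<in>carrier G. a (k \<otimes> g) * avg_coeff H (inv (k \<otimes> g) \<otimes> k))"
    unfolding convolution_def by (rule sum_lmult[OF k, symmetric])
  also have "\<dots> = (\<Sum>g\<in>carrier G. a (k \<otimes> g) * avg_coeff H (inv g))"
    by (rule sum.cong) (auto simp: k inv_mult_group m_assoc)
  also have "\<dots> = (\<Sum>g\<in>carrier G. avg_coeff H g * a (k \<otimes> inv g))"
    by (subst sum_inv[symmetric]) (simp add: mult.commute)
  finally show ?thesis by (simp add: sum_avg_coeff[OF H_subset])
qed

lemma average_over_H_const:
  "(\<And>h. h \<in> H \<Longrightarrow> F h = c) \<Longrightarrow> 1 / of_nat (card H) * (\<Sum>h\<in>H. F h) = (c :: complex)"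
  using card_H_pos by simp

lemma avg_map_comp_pH:
  assumes R: "is_rep G R" and D: "D \<in> double_cosets G H"
  shows "avg_map G R H D (avg_map G R H H x) = avg_map G R H D x"
proof -
  have "convolution (avg_coeff D) (avg_coeff H) k = avg_coeff D k" if k: "k \<in> carrier G" for k
    unfolding convolution_avg_coeff_right[OF k]
    by (rule average_over_H_const) (simp add: avg_coeff_def double_cosets_rmult_iff[OF D] k H_inv)
  thus ?thesis by (simp add: avg_map_eq grp_alg_map_convolution[OF R] cong: grp_alg_map_cong)
qed

lemma pH_comp_avg_map:
  assumes R: "is_rep G R" and D: "D \<in> double_cosets G H"
  shows "avg_map G R H H (avg_map G R H D x) = avg_map G R H D x"
proof -
  have "convolution (avg_coeff H) (avg_coeff D) k = avg_coeff D k" if k: "k \<in> carrier G" for k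
    unfolding convolution_avg_coeff_left[OF k]
    by (rule average_over_H_const) (simp add: avg_coeff_def double_cosets_lmult_iff[OF D] k H_inv)
  thus ?thesis by (simp add: avg_map_eq grp_alg_map_convolution[OF R] cong: grp_alg_map_cong)
qed

lemma pH_idempotent: "is_rep G R \<Longrightarrow> avg_map G R H H (avg_map G R H H x) = avg_map G R H H x"
  by (rule avg_map_comp_pH[OF _ subgroup_in_double_cosets])

lemma rep_mult_pH:
  assumes R: "is_rep G R" and h: "h \<in> H"
  shows "R h *v avg_map G R H H x = avg_map G R H H x"
proof -
  have hc: "h \<in> carrier G" using h H_carrier by blast
  have "R h *v grp_alg_map G R (avg_coeff H) x = (\<Sum>g\<in>carrier G. avg_coeff H g *s (R (h \<otimes> g) *v x))"
    by (simp add: grp_alg_map_def vec.sum vec.scale rep_mult_vec[OF R hc])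
  also have "\<dots> = (\<Sum>g\<in>carrier G. avg_coeff H (inv h \<otimes> g) *s (R (h \<otimes> (inv h \<otimes> g)) *v x))"
    by (rule sum_lmult[OF inv_closed[OF hc], symmetric])
  also have "\<dots> = (\<Sum>g\<in>carrier G. avg_coeff H g *s (R g *v x))"
    by (rule sum.cong)
      (auto simp: hc avg_coeff_def double_cosets_lmult_iff[OF subgroup_in_double_cosets] H_inv h)
  finally show ?thesis by (simp add: avg_map_eq grp_alg_map_def)
qed

lemma fixed_space_eq:
  assumes R: "is_rep G R"
  shows "fixed_space H R = {x. avg_map G R H H x = x}"
proof -
  have "avg_map G R H H x = x" if "\<And>h. h \<in> H \<Longrightarrow> R h *v x = x" for x
  proof -
    have "avg_map G R H H x = (1 / of_nat (card H)) *s (\<Sum>g\<in>H. x)"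
      by (simp add: avg_map_eq grp_alg_map_avg_coeff[OF H_subset] that)
    also have "\<dots> = x" using card_H_pos by (simp add: cvec_eq_iff of_nat_index)
    finally show ?thesis .
  qed
  moreover have "R h *v x = x" if "avg_map G R H H x = x" "h \<in> H" for x h
    using rep_mult_pH[OF R that(2), of x] that(1) by simp
  ultimately show ?thesis unfolding fixed_space_def by blast
qed

lemma range_pH_iff:
  assumes R: "is_rep G R"
  shows "x \<in> range (avg_map G R H H) \<longleftrightarrow> avg_map G R H H x = x"
proof
  assume "x \<in> range (avg_map G R H H)"
  then obtain y where "x = avg_map G R H H y" by blast
  thus "avg_map G R H H x = x" using pH_idempotent[OF R] by simp
qed (metis rangeI)

lemma avg_map_range_pH:
  assumes R: "is_rep G R" and D: "D \<in> double_cosets G H"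
  shows "avg_map G R H D ` range (avg_map G R H H) \<subseteq> range (avg_map G R H H)"
proof
  fix y assume "y \<in> avg_map G R H D ` range (avg_map G R H H)"
  then obtain x where "y = avg_map G R H D (avg_map G R H H x)" by blast
  hence "avg_map G R H H y = y" using pH_comp_avg_map[OF R D] by simp
  thus "y \<in> range (avg_map G R H H)" using range_pH_iff[OF R] by blast
qed

lemma double_coset_representatives:
  obtains r where "\<And>D. D \<in> double_cosets G H \<Longrightarrow> r D \<in> D"
proof -
  have "\<forall>D\<in>double_cosets G H. \<exists>y. y \<in> D"
    using double_coset_self by (auto simp: double_cosets_eq)
  thus ?thesis using that by metis
qed

lemma grp_alg_map_bi_invariant:
  assumes inv_left: "\<And>h k. h \<in> H \<Longrightarrow> k \<in> carrier G \<Longrightarrow> u (h \<otimes> k) = u k"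
    and inv_right: "\<And>h k. h \<in> H \<Longrightarrow> k \<in> carrier G \<Longrightarrow> u (k \<otimes> h) = u k"
    and r: "\<And>D. D \<in> double_cosets G H \<Longrightarrow> r D \<in> D"
  shows "grp_alg_map G R u x =
    (\<Sum>D\<in>double_cosets G H. (of_nat (card H) * u (r D)) *s avg_map G R H D x)"
proof -
  have "(\<Sum>k\<in>D. u k *s (R k *v x)) = (of_nat (card H) * u (r D)) *s avg_map G R H D x"
    if D: "D \<in> double_cosets G H" for D
  proof -
    have "u k = u (r D)" if k: "k \<in> D" for k
    proof -
      obtain h h' where h: "h \<in> H" "h' \<in> H" "k = h \<otimes> r D \<otimes> h'"
        using double_cosets_conj[OF D r[OF D] k] by blast
      have "r D \<in> carrier G" using r[OF D] double_cosets_subset_carrier[OF D] by blast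
      thus ?thesis using h by (simp add: inv_left inv_right H_carrier)
    qed
    hence "(\<Sum>k\<in>D. u k *s (R k *v x)) = (\<Sum>k\<in>D. u (r D) *s (R k *v x))" by simp
    thus ?thesis using card_H_pos
      by (simp add: avg_map_eq grp_alg_map_avg_coeff double_cosets_subset_carrier[OF D]
          vec.scale_sum_right[symmetric] vec.scale_scale)
  qed
  thus ?thesis by (simp add: grp_alg_map_def sum_double_cosets[of "\<lambda>k. u k *s (R k *v x)"])
qed

lemma left_coset_of_mult_eq:
  assumes "t \<in> carrier G" "t' \<in> carrier G" "h \<in> H" "h' \<in> H" "t \<otimes> h = t' \<otimes> h'"
  shows "t' \<in> t <# H"
proof -
  have "t \<otimes> (h \<otimes> inv h') = (t' \<otimes> h') \<otimes> inv h'"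
    using assms H_carrier by (simp flip: m_assoc)
  hence "t' = t \<otimes> (h \<otimes> inv h')" using assms H_carrier by (simp add: m_assoc)
  thus ?thesis using assms H_mult H_inv unfolding l_coset_def by blast
qed

lemma left_coset_representative:
  obtains r where "\<And>y. y \<in> carrier G \<Longrightarrow> r y \<in> y <# H"
    "\<And>y y'. y \<in> carrier G \<Longrightarrow> y' \<in> y <# H \<Longrightarrow> r y' = r y"
proof -
  define r where "r y = (SOME z. z \<in> y <# H)" for y
  have r: "r y \<in> y <# H" if "y \<in> carrier G" for y
  proof -
    have "y \<in> y <# H" using that one_in_H unfolding l_coset_def by force
    thus ?thesis unfolding r_def by (rule someI)
  qed
  have r_eq: "r y' = r y" if "y \<in> carrier G" "y' \<in> y <# H" for y y'
    using l_repr_independence[OF that(2,1) subgroup_H] by (simp add: r_def)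
  show ?thesis by (rule that[OF r r_eq])
qed

lemma left_coset_transversal:
  assumes D: "D \<subseteq> carrier G" and stable: "\<And>y h. y \<in> D \<Longrightarrow> h \<in> H \<Longrightarrow> y \<otimes> h \<in> D"
  obtains T where "T \<subseteq> D" "\<And>f. (\<Sum>y\<in>D. f y) = (\<Sum>t\<in>T. \<Sum>h\<in>H. f (t \<otimes> h))"
proof -
  obtain r where r: "\<And>y. y \<in> carrier G \<Longrightarrow> r y \<in> y <# H"
    and r_eq: "\<And>y y'. y \<in> carrier G \<Longrightarrow> y' \<in> y <# H \<Longrightarrow> r y' = r y"
    using left_coset_representative by blast
  define T where "T = r ` D"
  have T_coset: "t \<in> y <# H" "t \<in> D" if y: "y \<in> D" "t = r y" for t y
  proof -
    show "t \<in> y <# H" using y r[of y] D by auto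
    then obtain h where "h \<in> H" "t = y \<otimes> h" unfolding l_coset_def by blast
    thus "t \<in> D" using stable y(1) by simp
  qed
  have T: "T \<subseteq> D" using T_coset by (auto simp: T_def)
  have Tc: "t \<in> carrier G" if "t \<in> T" for t using that T D by blast
  have "inj_on (\<lambda>(t, h). t \<otimes> h) (T \<times> H)"
  proof (rule inj_onI, clarify)
    fix t h t' h' assume t: "t \<in> T" and h: "h \<in> H" and t': "t' \<in> T" and h': "h' \<in> H"
      and eq: "t \<otimes> h = t' \<otimes> h'"
    obtain y y' where y: "y \<in> D" "t = r y" and y': "y' \<in> D" "t' = r y'" using t t' by (auto simp: T_def)
    have "t' \<in> t <# H" using left_coset_of_mult_eq[OF Tc[OF t] Tc[OF t'] h h' eq] .
    moreover have "t <# H = y <# H"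
      using l_repr_independence[OF T_coset(1)[OF y] _ subgroup_H] y(1) D by auto
    ultimately have "r t' = t" using r_eq[of y t'] y D by auto
    moreover have "r t' = t'" using r_eq[OF _ T_coset(1)[OF y']] y' D by auto
    ultimately have "t = t'" by simp
    thus "t = t' \<and> h = h'" using eq Tc[OF t] h h' H_carrier by simp
  qed
  moreover have "(\<lambda>(t, h). t \<otimes> h) ` (T \<times> H) = D"
  proof (intro equalityI subsetI)
    fix z assume "z \<in> (\<lambda>(t, h). t \<otimes> h) ` (T \<times> H)"
    thus "z \<in> D" using T stable by auto
  next
    fix y assume y: "y \<in> D"
    have "y \<in> r y <# H" using l_coset_swap[OF r _ subgroup_H] y D by blast
    then obtain h where "h \<in> H" "y = r y \<otimes> h" unfolding l_coset_def by blast
    thus "y \<in> (\<lambda>(t, h). t \<otimes> h) ` (T \<times> H)"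
      using y unfolding T_def by (auto intro!: image_eqI[of _ _ "(r y, h)"])
  qed
  ultimately have "(\<Sum>y\<in>D. f y) = (\<Sum>t\<in>T. \<Sum>h\<in>H. f (t \<otimes> h))" for f
    using sum.reindex[of "\<lambda>(t, h). t \<otimes> h" "T \<times> H" f]
    by (simp add: sum.cartesian_product case_prod_unfold)
  with T show ?thesis by (rule that)
qed

end

section \<open>Schur's lemma and the orthogonality relations\<close>

lemma complex_mat_has_eigenvector:
  fixes B :: "complex Matrix.mat"
  assumes B: "B \<in> carrier_mat n n" and n: "n > 0"
  obtains a v where "eigenvector B v a"
proof -
  obtain as where as: "char_poly B = (\<Prod>a\<leftarrow>as. [:- a, 1:])" "length as = n"
    using char_poly_factorized[OF B] by blast
  then obtain a where "a \<in> set as" using n by (cases as) auto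
  hence "poly (char_poly B) a = 0" unfolding as(1) by (simp add: poly_prod_list prod_list_zero_iff)
  hence "eigenvalue B a" using eigenvalue_root_char_poly[OF B] by simp
  thus ?thesis using that unfolding eigenvalue_def by blast
qed

text \<open>The characteristic polynomial is only available for the matrices of
  \<open>Jordan_Normal_Form\<close>, so the eigenvector is transported along a numbering of the index type.\<close>
lemma complex_matrix_eigenvector_exists:
  fixes X :: "complex^'m^'m"
  shows "\<exists>c u. u \<noteq> 0 \<and> X *v u = c *s u"
proof -
  define n where "n = CARD('m)"
  obtain f where f: "bij_betw f {0..<n} (UNIV::'m set)"
    using ex_bij_betw_nat_finite[of "UNIV::'m set"] unfolding n_def by auto
  define B :: "complex Matrix.mat" where "B = Matrix.mat n n (\<lambda>(i,j). X $ f i $ f j)"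
  have Bc: "B \<in> carrier_mat n n" unfolding B_def by simp
  have "n > 0" unfolding n_def by simp
  then obtain a v where "eigenvector B v a" using complex_mat_has_eigenvector[OF Bc] by blast
  hence vc: "v \<in> carrier_vec n" and vnz: "v \<noteq> 0\<^sub>v n" and Bv: "B *\<^sub>v v = a \<cdot>\<^sub>v v"
    unfolding eigenvector_def using Bc by auto
  define g where "g = inv_into {0..<n} f"
  have gf: "g (f i) = i" if "i < n" for i using f that unfolding g_def bij_betw_def by (simp add: inv_into_f_f)
  have fg: "f (g k) = k" for k using f unfolding g_def bij_betw_def by (simp add: f_inv_into_f)
  have gn: "g k < n" for k using f unfolding g_def bij_betw_def
    by (metis atLeastLessThan_iff inv_into_into UNIV_I)
  define u :: "complex^'m" where "u = (\<chi> k. vec_index v (g k))"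
  have "X *v u = a *s u"
  proof (rule cvec_eq_iff[THEN iffD2], rule allI)
    fix k :: 'm
    have "(X *v u) $ k = (\<Sum>l\<in>UNIV. X $ k $ l * u $ l)" by (simp add: matrix_vector_mult_def)
    also have "\<dots> = (\<Sum>j\<in>{0..<n}. X $ k $ f j * vec_index v j)"
      unfolding sum.reindex_bij_betw[OF f, symmetric] u_def by (rule sum.cong) (auto simp: gf)
    also have "\<dots> = vec_index (B *\<^sub>v v) (g k)" using gn vc by (simp add: B_def scalar_prod_def fg)
    also have "\<dots> = (a *s u) $ k" using Bv gn vc by (simp add: u_def)
    finally show "(X *v u) $ k = (a *s u) $ k" .
  qed
  moreover have "u \<noteq> 0"
  proof
    assume "u = 0"
    hence "vec_index v i = 0" if "i < n" for i
      using gf[OF that] by (metis u_def vec_lambda_beta zero_index)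
    hence "v = 0\<^sub>v n" using vc by (intro eq_vecI) auto
    with vnz show False by simp
  qed
  ultimately show ?thesis by blast
qed

lemma sum_constant_scale: "(\<Sum>i\<in>A. x) = of_nat (card A) *s (x :: 'a::comm_ring_1^'n)"
  by (induct A rule: infinite_finite_induct) (simp_all add: vec.scale_left_distrib del: sum_constant)

lemma trace_sum: "trace (\<Sum>s\<in>S. f s) = (\<Sum>s\<in>S. trace (f s))"
  unfolding trace_def by (simp add: sum_component sum.swap[of _ UNIV])

lemma matrix_mult_axis: "(A *v axis l 1) $ j = A $ j $ l"
  by (simp add: matrix_vector_mult_def axis_def if_distrib cong: if_cong)

lemma matrix_add_rdistrib: "(B + C) ** A = B ** A + C ** (A :: 'a::semiring_1^_^_)"
  by (vector matrix_matrix_mult_def sum.distrib[symmetric] field_simps)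

lemma matrix_sum_mult: "(\<Sum>s\<in>S. f s) ** (A :: 'a::comm_ring_1^'p^'n) = (\<Sum>s\<in>S. f s ** A)"
  by (induct S rule: infinite_finite_induct) (simp_all add: matrix_add_rdistrib)

lemma matrix_mult_sum: "(A :: 'a::comm_ring_1^'n^'m) ** (\<Sum>s\<in>S. f s) = (\<Sum>s\<in>S. A ** f s)"
  by (induct S rule: infinite_finite_induct) (simp_all add: matrix_add_ldistrib)

context finite_group
begin

lemma schur:
  fixes \<rho> :: "'g \<Rightarrow> complex^'m^'m" and X :: "complex^'m^'m"
  assumes irr: "irreducible_rep G \<rho>" and comm: "\<And>g. g \<in> carrier G \<Longrightarrow> X ** \<rho> g = \<rho> g ** X"
  obtains c where "\<And>x. X *v x = c *s x"
proof -
  obtain c u where u: "u \<noteq> 0" "X *v u = c *s u"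
    using complex_matrix_eigenvector_exists[of X] by blast
  define S where "S = {x. X *v x = c *s x}"
  have "vec.subspace S" unfolding S_def vec.subspace_def
    by (auto simp: matrix_vector_right_distrib vec.scale_right_distrib vec.scale)
  moreover have "\<forall>g\<in>carrier G. \<forall>v\<in>S. \<rho> g *v v \<in> S"
  proof (intro ballI)
    fix g v assume g: "g \<in> carrier G" and v: "v \<in> S"
    have "X *v (\<rho> g *v v) = \<rho> g *v (X *v v)"
      using comm[OF g] by (simp add: matrix_vector_mul_assoc)
    thus "\<rho> g *v v \<in> S" using v by (simp add: S_def vec.scale)
  qed
  ultimately have "S = {0} \<or> S = UNIV" using irr unfolding irreducible_rep_def by blast
  with u have "S = UNIV" unfolding S_def by blast
  thus ?thesis using that unfolding S_def by blast
qed

definition conj_average :: "('g \<Rightarrow> complex^'m^'m) \<Rightarrow> complex^'m^'m \<Rightarrow> complex^'m^'m" where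
  "conj_average \<rho> X = (\<Sum>g\<in>carrier G. \<rho> g ** X ** \<rho> (inv g))"

lemma conj_average_commutes:
  assumes R: "is_rep G \<rho>" and h: "h \<in> carrier G"
  shows "conj_average \<rho> X ** \<rho> h = \<rho> h ** conj_average \<rho> X"
proof -
  have "\<rho> h ** conj_average \<rho> X = (\<Sum>g\<in>carrier G. \<rho> (h \<otimes> g) ** X ** \<rho> (inv g))"
    unfolding conj_average_def matrix_mult_sum
    by (rule sum.cong) (simp_all add: rep_mult[OF R h] matrix_mul_assoc)
  also have "\<dots> = (\<Sum>g\<in>carrier G. \<rho> (h \<otimes> (inv h \<otimes> g)) ** X ** \<rho> (inv (inv h \<otimes> g)))"
    by (rule sum_lmult[OF inv_closed[OF h], symmetric])
  also have "\<dots> = (\<Sum>g\<in>carrier G. \<rho> g ** X ** \<rho> (inv g) ** \<rho> h)"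
    by (rule sum.cong) (simp_all add: h inv_mult_group rep_mult[OF R] matrix_mul_assoc)
  also have "\<dots> = conj_average \<rho> X ** \<rho> h" unfolding conj_average_def matrix_sum_mult ..
  finally show ?thesis by simp
qed

lemma trace_conj_average:
  assumes R: "is_rep G \<rho>"
  shows "trace (conj_average \<rho> X) = of_nat (card (carrier G)) * trace X"
proof -
  have "trace (\<rho> g ** X ** \<rho> (inv g)) = trace X" if g: "g \<in> carrier G" for g
  proof -
    have "trace (\<rho> g ** X ** \<rho> (inv g)) = trace (\<rho> (inv g) ** (\<rho> g ** X))"
      by (rule trace_mul_sym)
    also have "\<dots> = trace X"
      using g by (simp add: matrix_mul_assoc rep_mult[OF R, symmetric] rep_one[OF R])
    finally show ?thesis .
  qed
  thus ?thesis by (simp add: conj_average_def trace_sum)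
qed

lemma orthogonality:
  fixes \<rho> :: "'g \<Rightarrow> complex^'m^'m"
  assumes irr: "irreducible_rep G \<rho>"
  shows "(\<Sum>g\<in>carrier G. \<rho> g $ j $ i * \<rho> (inv g) $ k $ l) =
     (if j = l \<and> i = k then of_nat (card (carrier G)) / of_nat CARD('m) else 0)"
proof -
  have R: "is_rep G \<rho>" using irr unfolding irreducible_rep_def by blast
  define E :: "complex^'m^'m" where "E = (\<chi> a b. if a = i \<and> b = k then 1 else 0)"
  obtain c where c: "\<And>x. conj_average \<rho> E *v x = c *s x"
    using schur[OF irr conj_average_commutes[OF R]] by metis
  have entry: "conj_average \<rho> E $ j' $ l' = (if j' = l' then c else 0)" for j' l'
    using c[of "axis l' 1"] matrix_mult_axis[of "conj_average \<rho> E" l' j']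
    by (cases "j' = l'") (simp_all add: axis_def)
  have "trace (conj_average \<rho> E) = c * of_nat CARD('m)"
    by (simp add: trace_def entry)
  moreover have "trace E = (if i = k then 1 else 0)"
    by (cases "i = k") (auto simp: trace_def E_def intro!: sum.neutral)
  ultimately have c_eq: "c = (if i = k then of_nat (card (carrier G)) / of_nat CARD('m) else 0)"
    using trace_conj_average[OF R, of E] by (auto simp: field_simps)
  have "(\<rho> g ** E ** \<rho> (inv g)) $ j $ l = \<rho> g $ j $ i * \<rho> (inv g) $ k $ l" for g
  proof -
    have row: "(\<rho> g ** E) $ j $ b = (if b = k then \<rho> g $ j $ i else 0)" for b
      by (cases "b = k") (simp_all add: matrix_matrix_mult_def E_def if_distrib cong: if_cong)
    show ?thesis
      by (simp add: matrix_matrix_mult_def[of "\<rho> g ** E"] row if_distrib if_distribR cong: if_cong)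
  qed
  hence "conj_average \<rho> E $ j $ l = (\<Sum>g\<in>carrier G. \<rho> g $ j $ i * \<rho> (inv g) $ k $ l)"
    by (simp add: conj_average_def sum_component)
  thus ?thesis using entry[of j l] c_eq by (cases "j = l"; cases "i = k") simp_all
qed

definition eW_coeff :: "('g \<Rightarrow> complex^'m^'m) \<Rightarrow> 'g \<Rightarrow> complex" where
  "eW_coeff \<rho> g = of_nat CARD('m) / of_nat (card (carrier G)) * character \<rho> (inv g)"

lemma eW_map_eq: "eW_map G M \<rho> = grp_alg_map G M (eW_coeff \<rho>)"
  by (simp add: eW_map_def eW_coeff_def[abs_def])

lemma grp_alg_matrix_eW_coeff:
  assumes irr: "irreducible_rep G (\<rho> :: 'g \<Rightarrow> complex^'m^'m)"
  shows "grp_alg_matrix G \<rho> (eW_coeff \<rho>) = mat 1"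
proof (rule cvec_eq_iff[THEN iffD2, OF allI], rule cvec_eq_iff[THEN iffD2, OF allI])
  fix j l
  define d :: complex where "d = of_nat CARD('m)"
  define N :: complex where "N = of_nat (card (carrier G))"
  have "grp_alg_matrix G \<rho> (eW_coeff \<rho>) $ j $ l
      = (\<Sum>g\<in>carrier G. d / N * (\<Sum>k\<in>UNIV. \<rho> g $ j $ l * \<rho> (inv g) $ k $ k))"
    by (simp add: grp_alg_matrix_def eW_coeff_def character_def trace_def d_def N_def
        sum_distrib_left mult_ac)
  also have "\<dots> = d / N * (\<Sum>k\<in>UNIV. \<Sum>g\<in>carrier G. \<rho> g $ j $ l * \<rho> (inv g) $ k $ k)"
    by (subst sum.swap) (simp add: sum_distrib_left)
  also have "\<dots> = d / N * (\<Sum>k\<in>UNIV. if j = k \<and> l = k then N / d else 0)"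
    unfolding d_def N_def by (simp add: orthogonality[OF irr])
  also have "\<dots> = (if j = l then 1 else 0)"
  proof (cases "j = l")
    case True thus ?thesis using card_carrier_pos by (simp add: d_def N_def)
  next
    case False thus ?thesis by (auto intro!: sum.neutral)
  qed
  finally show "grp_alg_matrix G \<rho> (eW_coeff \<rho>) $ j $ l = mat 1 $ j $ l"
    by (simp add: Finite_Cartesian_Product.mat_def)
qed

lemma eW_identity: "irreducible_rep G \<rho> \<Longrightarrow> grp_alg_map G \<rho> (eW_coeff \<rho>) x = x"
  by (simp flip: grp_alg_matrix_mult_vec add: grp_alg_matrix_eW_coeff)

end

section \<open>An irreducible representation with a one-dimensional space of \<open>H\<close>-invariants\<close>

lemma trace_mult_proportional:
  fixes A B C :: "'a::comm_ring_1^'n^'n"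
  assumes "\<And>x. A *v x = c *s (B *v x)"
  shows "trace (C ** A) = c * trace (C ** B)"
proof -
  have "A $ i $ j = c * B $ i $ j" for i j
    using assms[of "axis j 1"] matrix_mult_axis[of A j i] matrix_mult_axis[of B j i] by simp
  thus ?thesis by (simp add: trace_def matrix_matrix_mult_def sum_distrib_left mult.left_commute)
qed

context finite_subgroup
begin

lemma trace_mult_avg_coeff_matrix:
  assumes R: "is_rep G R" and k: "k \<in> carrier G" and D: "D \<subseteq> carrier G"
  shows "trace (R k ** grp_alg_matrix G R (avg_coeff D))
    = 1 / of_nat (card H) * (\<Sum>y\<in>D. character R (k \<otimes> y))"
proof -
  have "trace (R k ** R y) = character R (k \<otimes> y)" if "y \<in> D" for y
    using that D by (auto simp: character_def rep_mult[OF R k])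
  thus ?thesis by (simp add: trace_mult_grp_alg_matrix sum_avg_coeff[OF D])
qed

lemma trace_avg_coeff_matrix:
  "is_rep G R \<Longrightarrow> D \<subseteq> carrier G \<Longrightarrow> trace (grp_alg_matrix G R (avg_coeff D)) = chi_avg R H D"
  using trace_mult_avg_coeff_matrix[of R \<one> D] by (auto simp: rep_one chi_avg_def intro!: sum.cong)

end

locale spherical_rep = finite_subgroup G H for G :: "('g, 'b) monoid_scheme" (structure) and H +
  fixes \<rho> :: "'g \<Rightarrow> complex^'m^'m"
  assumes irreducible: "irreducible_rep G \<rho>"
    and dim_fixed_space: "vec.dim (fixed_space H \<rho>) = 1"
begin

lemma is_rep: "is_rep G \<rho>"
  using irreducible unfolding irreducible_rep_def by blast

lemma fixed_vector:
  obtains v i where "v $ i \<noteq> 0" "avg_map G \<rho> H H v = v"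
    "\<And>x. avg_map G \<rho> H H x = x \<Longrightarrow> x = (x $ i / v $ i) *s v"
proof -
  obtain B where B: "B \<subseteq> fixed_space H \<rho>" "vec.independent B" "fixed_space H \<rho> \<subseteq> vec.span B"
    "card B = vec.dim (fixed_space H \<rho>)"
    using vec.basis_exists by blast
  then obtain v where v: "B = {v}" using dim_fixed_space by (auto simp: card_Suc_eq)
  have "v \<noteq> 0" using B(2) v vec.dependent_zero by blast
  then obtain i where i: "v $ i \<noteq> 0" by (auto simp: cvec_eq_iff)
  have "x = (x $ i / v $ i) *s v" if "avg_map G \<rho> H H x = x" for x
  proof -
    have "x \<in> vec.span {v}" using that B(3) v fixed_space_eq[OF is_rep] by auto
    then obtain c where "x = c *s v" by (auto simp: vec.span_singleton)
    thus ?thesis using i by simp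
  qed
  moreover have "avg_map G \<rho> H H v = v" using B(1) v fixed_space_eq[OF is_rep] by auto
  ultimately show ?thesis using that i by blast
qed

lemma avg_map_proportional_pH:
  assumes D: "D \<in> double_cosets G H"
  obtains c where "\<And>x. avg_map G \<rho> H D x = c *s avg_map G \<rho> H H x"
proof -
  obtain v i where v: "v $ i \<noteq> 0" "avg_map G \<rho> H H v = v"
    and line: "\<And>x. avg_map G \<rho> H H x = x \<Longrightarrow> x = (x $ i / v $ i) *s v"
    using fixed_vector by blast
  let ?P = "avg_map G \<rho> H H" and ?Q = "avg_map G \<rho> H D"
  have P_line: "?P x = (?P x $ i / v $ i) *s v" for x
    using line pH_idempotent[OF is_rep] by blast
  have Qv: "?Q v = (?Q v $ i / v $ i) *s v"
    using line pH_comp_avg_map[OF is_rep D] by blast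
  have "?Q x = (?Q v $ i / v $ i) *s ?P x" for x
  proof -
    have "?Q x = ?Q (?P x)" by (simp add: avg_map_comp_pH[OF is_rep D])
    also have "\<dots> = (?P x $ i / v $ i) *s ?Q v"
      by (subst P_line) (simp add: avg_map_eq grp_alg_map_scale)
    also have "\<dots> = (?Q v $ i / v $ i) *s ?P x"
      by (subst Qv, subst (2) P_line) (simp add: vec.scale_scale mult.commute)
    finally show ?thesis .
  qed
  thus ?thesis using that by blast
qed

lemma trace_pH_matrix: "trace (grp_alg_matrix G \<rho> (avg_coeff H)) = 1"
proof -
  obtain v i where v: "v $ i \<noteq> 0" "avg_map G \<rho> H H v = v"
    and line: "\<And>x. avg_map G \<rho> H H x = x \<Longrightarrow> x = (x $ i / v $ i) *s v"
    using fixed_vector by blast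
  let ?P = "avg_map G \<rho> H H"
  have P_line: "?P x $ j = v $ j * ?P x $ i / v $ i" for x j
    using line[of "?P x"] pH_idempotent[OF is_rep]
    by (metis vector_smult_component mult.commute times_divide_eq_right)
  have "trace (grp_alg_matrix G \<rho> (avg_coeff H)) = (\<Sum>j\<in>UNIV. ?P (axis j 1) $ j)"
    unfolding trace_def by (simp add: matrix_mult_axis[symmetric] grp_alg_matrix_mult_vec avg_map_eq)
  also have "\<dots> = (\<Sum>j\<in>UNIV. v $ j * ?P (axis j 1) $ i) / v $ i"
    by (subst P_line) (simp add: sum_divide_distrib)
  also have "(\<Sum>j\<in>UNIV. v $ j * ?P (axis j 1) $ i) = ?P (\<Sum>j\<in>UNIV. v $ j *s axis j 1) $ i"
    by (simp add: avg_map_eq grp_alg_map_sum grp_alg_map_scale sum_component)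
  also have "(\<Sum>j\<in>UNIV. v $ j *s axis j 1) = v" by (rule basis_expansion)
  finally show ?thesis using v by simp
qed

lemma chi_avg_subgroup: "chi_avg \<rho> H H = 1"
  using trace_pH_matrix trace_avg_coeff_matrix[OF is_rep H_subset] by simp

lemma avg_map_on_rep:
  assumes D: "D \<in> double_cosets G H"
  shows "avg_map G \<rho> H D x = chi_avg \<rho> H D *s avg_map G \<rho> H H x"
proof -
  obtain c where c: "\<And>x. avg_map G \<rho> H D x = c *s avg_map G \<rho> H H x"
    using avg_map_proportional_pH[OF D] by blast
  have "trace (mat 1 ** grp_alg_matrix G \<rho> (avg_coeff D))
      = c * trace (mat 1 ** grp_alg_matrix G \<rho> (avg_coeff H))"
    by (rule trace_mult_proportional) (simp add: grp_alg_matrix_mult_vec c flip: avg_map_eq)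
  hence "c = chi_avg \<rho> H D"
    using trace_pH_matrix trace_avg_coeff_matrix[OF is_rep double_cosets_subset_carrier[OF D]] by simp
  thus ?thesis using c by simp
qed

end

section \<open>Integrality of \<open>\<chi>\<^sub>V(q\<^sub>D)\<close>\<close>

lemma Rats_common_denominator:
  fixes a :: "'k \<Rightarrow> complex"
  assumes "finite S" "\<forall>k\<in>S. a k \<in> \<rat>"
  shows "\<exists>N::int. N > 0 \<and> (\<forall>k\<in>S. of_int N * a k \<in> \<int>)"
  using assms
proof (induct S rule: finite_induct)
  case empty thus ?case by (intro exI[of _ 1]) simp
next
  case (insert x F)
  then obtain N where N: "N > 0" "\<forall>k\<in>F. of_int N * a k \<in> \<int>" by auto
  have "a x \<in> \<rat>" using insert by simp
  then obtain p q where pq: "q > 0" "a x = of_int p / of_int q" by (rule Rats_cases') blast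
  have "of_int (N * q) * a k \<in> \<int>" if "k \<in> insert x F" for k
  proof (cases "k = x")
    case True
    have q0: "(of_int q :: complex) \<noteq> 0" using pq by simp
    have "of_int (N * q) * a k = (of_int (N * p) :: complex)" using True pq q0 by (simp add: field_simps)
    thus ?thesis by (simp only: Ints_of_int)
  next
    case False
    hence "k \<in> F" using that by simp
    hence "of_int q * (of_int N * a k) \<in> \<int>" using N by (simp add: Ints_mult)
    thus ?thesis by (simp add: mult_ac)
  qed
  thus ?case using N pq by (intro exI[of _ "N * q"]) simp
qed

lemma Rats_in_Ints_if_bounded_multiples:
  fixes lam :: complex and N :: int
  assumes lam: "lam \<in> \<rat>" and N: "N > 0" and h: "\<And>n. of_int N * lam ^ n \<in> \<int>"
  shows "lam \<in> \<int>"
proof -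
  obtain a b where ab: "b > 0" "coprime a b" "lam = of_int a / of_int b" using lam by (rule Rats_cases') blast
  have dv: "b ^ n dvd N" for n
  proof -
    obtain m where m: "of_int N * lam ^ n = (of_int m :: complex)" using h[of n] by (auto elim: Ints_cases)
    hence "of_int N * (of_int a) ^ n = (of_int m :: complex) * (of_int b) ^ n"
      using ab by (simp add: power_divide field_simps)
    hence "N * a ^ n = m * b ^ n" by (metis of_int_eq_iff of_int_mult of_int_power)
    hence "b ^ n dvd N * a ^ n" by simp
    moreover have "coprime (b ^ n) (a ^ n)" using ab(2) by (simp add: coprime_commute)
    ultimately show ?thesis by (simp add: coprime_dvd_mult_left_iff)
  qed
  have "b = 1"
  proof (rule ccontr)
    assume "b \<noteq> 1"
    hence b2: "b \<ge> 2" using ab by simp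
    define n where "n = nat N"
    have "b ^ n \<le> N" using dv[of n] N by (simp add: zdvd_imp_le)
    moreover have "2 ^ n \<le> b ^ n" using b2 by (simp add: power_mono)
    moreover have "int n < 2 ^ n"
    proof -
      have "int n < int (2 ^ n)" using less_exp[of n] by linarith
      thus ?thesis by simp
    qed
    ultimately show False using N unfolding n_def by simp
  qed
  thus ?thesis using ab by simp
qed

definition int_combinations :: "'k set \<Rightarrow> ('k \<Rightarrow> complex) \<Rightarrow> complex set" where
  "int_combinations S a = {z. \<exists>c::'k \<Rightarrow> int. z = (\<Sum>j\<in>S. of_int (c j) * a j)}"

lemma sum_in_int_combinations:
  assumes "finite S" "T \<subseteq> S"
  shows "(\<Sum>j\<in>T. a j) \<in> int_combinations S a"
proof -
  have "(\<Sum>j\<in>S. of_int (if j \<in> T then 1 else 0) * a j) = (\<Sum>j\<in>S. if j \<in> T then a j else 0)"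
    by (rule sum.cong) auto
  also have "\<dots> = (\<Sum>j\<in>T. a j)"
    using assms by (simp add: sum.inter_restrict[symmetric] Int_absorb1)
  finally show ?thesis
    unfolding int_combinations_def by (intro CollectI exI[of _ "\<lambda>j. if j \<in> T then 1 else 0"]) simp
qed

lemma int_combinations_mult_closed:
  assumes step: "\<And>k. k \<in> S \<Longrightarrow> lam * a k \<in> int_combinations S a"
    and z: "z \<in> int_combinations S a"
  shows "lam * z \<in> int_combinations S a"
proof -
  have "\<forall>k\<in>S. \<exists>d::'a \<Rightarrow> int. lam * a k = (\<Sum>j\<in>S. of_int (d j) * a j)"
    using step unfolding int_combinations_def by blast
  then obtain d where d: "\<And>k. k \<in> S \<Longrightarrow> lam * a k = (\<Sum>j\<in>S. of_int (d k j) * a j)"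
    by (metis bchoice)
  obtain c where c: "z = (\<Sum>j\<in>S. of_int (c j) * a j)" using z unfolding int_combinations_def by blast
  have "lam * z = (\<Sum>k\<in>S. of_int (c k) * (lam * a k))"
    by (simp add: c sum_distrib_left mult_ac)
  also have "\<dots> = (\<Sum>k\<in>S. \<Sum>j\<in>S. of_int (c k * d k j) * a j)"
    by (rule sum.cong[OF refl]) (simp add: d sum_distrib_left mult_ac)
  also have "\<dots> = (\<Sum>j\<in>S. of_int (\<Sum>k\<in>S. c k * d k j) * a j)"
    by (subst sum.swap) (simp add: sum_distrib_right)
  finally show ?thesis
    unfolding int_combinations_def by (intro CollectI exI[of _ "\<lambda>j. \<Sum>k\<in>S. c k * d k j"])
qed

lemma int_combinations_common_denominator:
  assumes S: "finite S" and rat: "\<forall>k\<in>S. a k \<in> \<rat>"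
  obtains N :: int where "N > 0" "\<And>z. z \<in> int_combinations S a \<Longrightarrow> of_int N * z \<in> \<int>"
proof -
  obtain N where N: "N > 0" "\<forall>k\<in>S. of_int N * a k \<in> \<int>" using Rats_common_denominator[OF S rat] by blast
  have "of_int N * (\<Sum>j\<in>S. of_int (c j) * a j) \<in> \<int>" for c :: "'a \<Rightarrow> int"
  proof -
    have "of_int N * (\<Sum>j\<in>S. of_int (c j) * a j) = (\<Sum>j\<in>S. of_int (c j) * (of_int N * a j))"
      by (simp add: sum_distrib_left mult.left_commute)
    also have "\<dots> \<in> \<int>" by (rule Ints_sum, rule Ints_mult) (simp_all add: N(2))
    finally show ?thesis .
  qed
  thus ?thesis using that N(1) unfolding int_combinations_def by blast
qed

text \<open>A rational number acting on a finitely generated \<open>\<int>\<close>-module of rationals containing \<open>1\<close>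
  is an algebraic integer, hence an integer.\<close>
lemma Rats_eigenvalue_in_Ints:
  assumes S: "finite S" and e: "e \<in> S" "a e = 1" and rat: "\<forall>k\<in>S. a k \<in> \<rat>" and lam: "lam \<in> \<rat>"
    and step: "\<And>k. k \<in> S \<Longrightarrow> lam * a k \<in> int_combinations S a"
  shows "lam \<in> \<int>"
proof -
  have "1 \<in> int_combinations S a" using sum_in_int_combinations[OF S, of "{e}" a] e by simp
  hence "lam ^ n \<in> int_combinations S a" for n
    by (induct n) (simp_all add: int_combinations_mult_closed[OF step])
  moreover obtain N :: int where "N > 0" "\<And>z. z \<in> int_combinations S a \<Longrightarrow> of_int N * z \<in> \<int>"
    using int_combinations_common_denominator[OF S rat] by blast
  ultimately show ?thesis using Rats_in_Ints_if_bounded_multiples[OF lam] by blast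
qed

context spherical_rep
begin

definition spherical_fun :: "'g \<Rightarrow> complex" where
  "spherical_fun k = trace (\<rho> k ** grp_alg_matrix G \<rho> (avg_coeff H))"

lemma spherical_fun_one: "spherical_fun \<one> = 1"
  using trace_pH_matrix by (simp add: spherical_fun_def rep_one[OF is_rep])

lemma spherical_fun_eq:
  "k \<in> carrier G \<Longrightarrow> spherical_fun k = 1 / of_nat (card H) * (\<Sum>h\<in>H. character \<rho> (k \<otimes> h))"
  unfolding spherical_fun_def by (rule trace_mult_avg_coeff_matrix[OF is_rep _ H_subset])

lemma chi_avg_mult_spherical_fun:
  assumes D: "D \<in> double_cosets G H" and k: "k \<in> carrier G"
    and T: "T \<subseteq> D" "\<And>f :: 'g \<Rightarrow> complex. (\<Sum>y\<in>D. f y) = (\<Sum>t\<in>T. \<Sum>h\<in>H. f (t \<otimes> h))"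
  shows "chi_avg \<rho> H D * spherical_fun k = (\<Sum>t\<in>T. spherical_fun (k \<otimes> t))"
proof -
  have Tc: "t \<in> carrier G" if "t \<in> T" for t
    using that T(1) double_cosets_subset_carrier[OF D] by blast
  have "chi_avg \<rho> H D * spherical_fun k = trace (\<rho> k ** grp_alg_matrix G \<rho> (avg_coeff D))"
    unfolding spherical_fun_def
    by (rule trace_mult_proportional[symmetric])
      (simp add: grp_alg_matrix_mult_vec avg_map_on_rep[OF D] flip: avg_map_eq)
  also have "\<dots> = 1 / of_nat (card H) * (\<Sum>t\<in>T. \<Sum>h\<in>H. character \<rho> (k \<otimes> (t \<otimes> h)))"
    by (simp add: trace_mult_avg_coeff_matrix[OF is_rep k double_cosets_subset_carrier[OF D]]
        T(2)[of "\<lambda>y. character \<rho> (k \<otimes> y)"])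
  also have "\<dots> = (\<Sum>t\<in>T. spherical_fun (k \<otimes> t))"
    by (simp add: sum_distrib_left spherical_fun_eq Tc k m_assoc H_carrier cong: sum.cong)
  finally show ?thesis .
qed

lemma chi_avg_Ints:
  assumes rational: "\<forall>g\<in>carrier G. character \<rho> g \<in> \<rat>" and D: "D \<in> double_cosets G H"
  shows "chi_avg \<rho> H D \<in> \<int>"
proof (rule Rats_eigenvalue_in_Ints[where a = spherical_fun, OF finite_carrier one_closed spherical_fun_one])
  show "\<forall>k\<in>carrier G. spherical_fun k \<in> \<rat>"
    using rational by (auto simp: spherical_fun_eq H_carrier intro!: Rats_divide Rats_sum)
  show "chi_avg \<rho> H D \<in> \<rat>"
    using rational double_cosets_subset_carrier[OF D] unfolding chi_avg_def
    by (auto intro!: Rats_divide Rats_sum)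
  obtain T where T: "T \<subseteq> D"
    "\<And>f :: 'g \<Rightarrow> complex. (\<Sum>y\<in>D. f y) = (\<Sum>t\<in>T. \<Sum>h\<in>H. f (t \<otimes> h))"
    using left_coset_transversal[OF double_cosets_subset_carrier[OF D] double_cosets_rmult[OF D]]
    by blast
  have Tc: "T \<subseteq> carrier G" using T(1) double_cosets_subset_carrier[OF D] by blast
  fix k assume k: "k \<in> carrier G"
  have "chi_avg \<rho> H D * spherical_fun k = (\<Sum>j\<in>(\<lambda>t. k \<otimes> t) ` T. spherical_fun j)"
    using chi_avg_mult_spherical_fun[OF D k T] Tc k by (simp add: sum.reindex inj_on_def subset_iff)
  also have "\<dots> \<in> int_combinations (carrier G) spherical_fun"
    using Tc k by (intro sum_in_int_combinations finite_carrier) auto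
  finally show "chi_avg \<rho> H D * spherical_fun k \<in> int_combinations (carrier G) spherical_fun" .
qed

end

section \<open>The idempotent \<open>p\<^sub>H e\<^sub>W\<close> on an arbitrary representation\<close>

context finite_subgroup
begin

lemma avg_coeff_subgroup_lmult: "k \<in> carrier G \<Longrightarrow> h \<in> H \<Longrightarrow> avg_coeff H (h \<otimes> k) = avg_coeff H k"
  by (simp add: avg_coeff_def double_cosets_lmult_iff[OF subgroup_in_double_cosets])

lemma avg_coeff_subgroup_rmult: "k \<in> carrier G \<Longrightarrow> h \<in> H \<Longrightarrow> avg_coeff H (k \<otimes> h) = avg_coeff H k"
  by (simp add: avg_coeff_def double_cosets_rmult_iff[OF subgroup_in_double_cosets])

lemma convolution_left_invariant:
  assumes a: "\<And>k h. k \<in> carrier G \<Longrightarrow> h \<in> H \<Longrightarrow> a (h \<otimes> k) = a k"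
    and k: "k \<in> carrier G" and h: "h \<in> H"
  shows "convolution a b (h \<otimes> k) = convolution a b k"
proof -
  have hc: "h \<in> carrier G" using h H_carrier by blast
  have "convolution a b (h \<otimes> k) = (\<Sum>g\<in>carrier G. a (h \<otimes> g) * b (inv (h \<otimes> g) \<otimes> (h \<otimes> k)))"
    unfolding convolution_def by (rule sum_lmult[OF hc, symmetric])
  also have "\<dots> = convolution a b k"
    unfolding convolution_def
    by (rule sum.cong) (simp_all add: a h hc k inv_mult_group m_assoc)
  finally show ?thesis .
qed

lemma convolution_right_invariant:
  assumes b: "\<And>k h. k \<in> carrier G \<Longrightarrow> h \<in> H \<Longrightarrow> b (k \<otimes> h) = b k"
    and k: "k \<in> carrier G" and h: "h \<in> H"
  shows "convolution a b (k \<otimes> h) = convolution a b k"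
  unfolding convolution_def using k h H_carrier
  by (auto simp: b m_assoc[symmetric] intro!: sum.cong)

lemma convolution_avg_coeff_trace:
  fixes \<rho> :: "'g \<Rightarrow> complex^'m^'m"
  assumes R: "is_rep G \<rho>" and D: "D \<subseteq> carrier G" and k: "k \<in> carrier G"
  shows "convolution (avg_coeff D) (eW_coeff \<rho>) k
    = of_nat CARD('m) / of_nat (card (carrier G)) * trace (\<rho> (inv k) ** grp_alg_matrix G \<rho> (avg_coeff D))"
proof -
  have "eW_coeff \<rho> (inv g \<otimes> k) = of_nat CARD('m) / of_nat (card (carrier G)) * trace (\<rho> (inv k) ** \<rho> g)"
    if "g \<in> carrier G" for g
    using that k by (simp add: eW_coeff_def character_def inv_mult_group rep_mult[OF R])
  thus ?thesis
    by (simp add: convolution_def trace_mult_grp_alg_matrix sum_distrib_left mult_ac cong: sum.cong)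
qed

end

context spherical_rep
begin

lemma avg_map_pH_eW:
  assumes R: "is_rep G R" and D: "D \<in> double_cosets G H"
  shows "avg_map G R H D (avg_map G R H H (grp_alg_map G R (eW_coeff \<rho>) x))
       = chi_avg \<rho> H D *s avg_map G R H H (grp_alg_map G R (eW_coeff \<rho>) x)"
proof -
  have "convolution (avg_coeff D) (eW_coeff \<rho>) k = chi_avg \<rho> H D * convolution (avg_coeff H) (eW_coeff \<rho>) k"
    if k: "k \<in> carrier G" for k
  proof -
    have "trace (\<rho> (inv k) ** grp_alg_matrix G \<rho> (avg_coeff D))
        = chi_avg \<rho> H D * trace (\<rho> (inv k) ** grp_alg_matrix G \<rho> (avg_coeff H))"
      by (rule trace_mult_proportional)
        (simp add: grp_alg_matrix_mult_vec avg_map_on_rep[OF D] flip: avg_map_eq)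
    thus ?thesis
      using convolution_avg_coeff_trace[OF is_rep double_cosets_subset_carrier[OF D] k]
        convolution_avg_coeff_trace[OF is_rep H_subset k] by simp
  qed
  hence "grp_alg_map G R (convolution (avg_coeff D) (eW_coeff \<rho>)) x
      = chi_avg \<rho> H D *s grp_alg_map G R (convolution (avg_coeff H) (eW_coeff \<rho>)) x"
    by (simp add: grp_alg_map_coeff_scale[symmetric] cong: grp_alg_map_cong)
  thus ?thesis
    unfolding avg_map_comp_pH[OF R D] by (simp only: avg_map_eq grp_alg_map_convolution[OF R])
qed

lemma pH_eW_on_eigenvectors:
  assumes R: "is_rep G R" and eig: "\<And>D. D \<in> double_cosets G H \<Longrightarrow> avg_map G R H D x = chi_avg \<rho> H D *s x"
  shows "avg_map G R H H (grp_alg_map G R (eW_coeff \<rho>) x) = x"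
proof -
  define u where "u = convolution (avg_coeff H) (convolution (eW_coeff \<rho>) (avg_coeff H))"
  obtain r where r: "\<And>D. D \<in> double_cosets G H \<Longrightarrow> r D \<in> D"
    using double_coset_representatives by blast
  define s where "s = (\<Sum>D\<in>double_cosets G H. of_nat (card H) * u (r D) * chi_avg \<rho> H D)"
  have u_bi_invariant: "u (h \<otimes> k) = u k" "u (k \<otimes> h) = u k" if "h \<in> H" "k \<in> carrier G" for h k
    using that unfolding u_def
    by (auto intro!: convolution_left_invariant convolution_right_invariant
        avg_coeff_subgroup_lmult avg_coeff_subgroup_rmult)
  have u_scalar: "avg_map G R' H H (grp_alg_map G R' (eW_coeff \<rho>) y) = s *s y"
    if R': "is_rep G R'" and eig': "\<And>D. D \<in> double_cosets G H \<Longrightarrow> avg_map G R' H D y = chi_avg \<rho> H D *s y"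
    for R' :: "'g \<Rightarrow> complex^'k^'k" and y
  proof -
    have "grp_alg_map G R' u y = avg_map G R' H H (grp_alg_map G R' (eW_coeff \<rho>) (avg_map G R' H H y))"
      by (simp add: u_def avg_map_eq grp_alg_map_convolution[OF R'])
    hence "avg_map G R' H H (grp_alg_map G R' (eW_coeff \<rho>) y) = grp_alg_map G R' u y"
      using eig'[OF subgroup_in_double_cosets] by (simp add: chi_avg_subgroup)
    also have "\<dots> = s *s y"
      by (simp add: grp_alg_map_bi_invariant[OF u_bi_invariant r] eig' s_def vec.scale_scale
          vec.scale_sum_left)
    finally show ?thesis .
  qed
  obtain v i where v: "v $ i \<noteq> 0" "avg_map G \<rho> H H v = v"
    using fixed_vector by blast
  have "s *s v = v"
    using u_scalar[OF is_rep, of v] v(2) by (simp add: eW_identity[OF irreducible] avg_map_on_rep)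
  hence "s = 1" using v(1) by (metis vector_smult_component mult_cancel_right2)
  thus ?thesis using u_scalar[OF R eig] by simp
qed

end

section \<open>Discrete lattices and complex tori\<close>

lemma connected_component_of_clopen:
  assumes "connectedin X C" "openin X C" "closedin X C" "x \<in> C"
  shows "connected_component_of_set X x = C"
  using assms connectedin_clopen_cases[OF _ assms(3,2)]
  by (intro connected_component_of_unique) (auto simp: disjnt_def)

lemma cscale_real: "complex_of_real r *s x = r *\<^sub>R (x :: complex^'n)"
  by (rule cvec_eq_iff[THEN iffD2]) (simp add: vector_scalar_mult_def, simp add: scaleR_conv_of_real)

lemma complex_linear_imp_bounded_linear:
  fixes f :: "complex^'n \<Rightarrow> complex^'k"
  assumes add: "\<And>x y. f (x + y) = f x + f y" and scale: "\<And>c x. f (c *s x) = c *s f x"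
  shows "bounded_linear f"
proof -
  have "linear f"
    by (rule linearI) (simp_all add: add scale cscale_real[symmetric])
  thus ?thesis by (simp add: linear_conv_bounded_linear)
qed

lemma uniform_bound_bounded_linear:
  fixes f :: "'i \<Rightarrow> 'a::real_normed_vector \<Rightarrow> 'b::real_normed_vector"
  assumes I: "finite I" and f: "\<And>i. i \<in> I \<Longrightarrow> bounded_linear (f i)"
  obtains K where "K > 0" "\<And>i x. i \<in> I \<Longrightarrow> norm (f i x) \<le> norm x * K"
proof -
  have "\<forall>i\<in>I. \<exists>K>0. \<forall>x. norm (f i x) \<le> norm x * K" using f bounded_linear.pos_bounded by blast
  then obtain K where K: "\<And>i. i \<in> I \<Longrightarrow> K i > 0" "\<And>i x. i \<in> I \<Longrightarrow> norm (f i x) \<le> norm x * K i"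
    by metis
  have sum_nonneg: "(\<Sum>i\<in>I. K i) \<ge> 0" using K(1) by (simp add: sum_nonneg less_imp_le)
  show ?thesis
  proof (rule that[of "(\<Sum>i\<in>I. K i) + 1"])
    show "(\<Sum>i\<in>I. K i) + 1 > 0" using sum_nonneg by simp
    fix i and x :: 'a assume i: "i \<in> I"
    have "K i \<le> (\<Sum>i\<in>I. K i)" using i I K(1) by (intro member_le_sum) (auto simp: less_imp_le)
    hence "norm x * K i \<le> norm x * ((\<Sum>i\<in>I. K i) + 1)" by (simp add: mult_left_mono)
    thus "norm (f i x) \<le> norm x * ((\<Sum>i\<in>I. K i) + 1)" using K(2)[OF i, of x] by simp
  qed
qed

lemma integer_combinations_discrete:
  fixes B :: "'a::euclidean_space set"
  assumes B: "finite B" "independent B" "span B = UNIV"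
  shows "\<exists>\<delta>>0. \<forall>c. norm (\<Sum>b\<in>B. of_int (c b) *\<^sub>R b) < \<delta> \<longrightarrow> (\<Sum>b\<in>B. of_int (c b) *\<^sub>R b) = 0"
proof -
  define R where "R b x = representation B x b" for b x
  have "linear (R b)" for b
    by (rule linearI) (simp_all add: R_def representation_add representation_scale B)
  then obtain K where K: "K > 0" "\<And>b x. b \<in> B \<Longrightarrow> norm (R b x) \<le> norm x * K"
    using uniform_bound_bounded_linear[OF B(1), of R] by (metis linear_conv_bounded_linear)
  show ?thesis
  proof (intro exI[of _ "1 / K"] conjI allI impI)
    show "1 / K > 0" using K by simp
    fix c assume small: "norm (\<Sum>b\<in>B. of_int (c b) *\<^sub>R b) < 1 / K"
    define l where "l = (\<Sum>b\<in>B. of_int (c b) *\<^sub>R b)"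
    have coeff: "R b l = of_int (c b)" if b: "b \<in> B" for b
    proof -
      have "R b l = (\<Sum>b'\<in>B. representation B (of_int (c b') *\<^sub>R b') b)"
        unfolding R_def l_def by (subst representation_sum[OF B(2)]) (simp_all add: B(3))
      also have "\<dots> = (\<Sum>b'\<in>B. of_int (c b') * (if b = b' then 1 else 0))"
        using B by (intro sum.cong) (simp_all add: representation_scale representation_basis)
      also have "\<dots> = of_int (c b)" using b B(1) by (simp add: if_distrib cong: if_cong)
      finally show ?thesis .
    qed
    have "c b = 0" if b: "b \<in> B" for b
    proof -
      have "\<bar>of_int (c b)\<bar> \<le> norm l * K" using K(2)[OF b, of l] coeff[OF b] by simp
      also have "\<dots> < 1" using small K(1) by (simp add: l_def field_simps)
      finally show ?thesis by linarith
    qed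
    thus "(\<Sum>b\<in>B. of_int (c b) *\<^sub>R b) = 0" by simp
  qed
qed

locale discrete_lattice =
  fixes L :: "(complex^'n) set"
  assumes zero_mem: "0 \<in> L" and add_mem: "\<And>a b. a \<in> L \<Longrightarrow> b \<in> L \<Longrightarrow> a + b \<in> L"
    and uminus_mem: "\<And>a. a \<in> L \<Longrightarrow> - a \<in> L"
    and discrete: "\<exists>\<delta>>0. \<forall>l\<in>L. norm l < \<delta> \<longrightarrow> l = 0"

lemma is_lattice_imp_discrete_lattice:
  fixes L :: "(complex^'n) set"
  assumes "is_lattice L"
  shows "discrete_lattice L"
proof
  obtain B where B: "finite B" "independent B" "card B = DIM(complex^'n)"
    and L: "L = {(\<Sum>b\<in>B. of_int (c b) *\<^sub>R b) | c. True}"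
    using assms unfolding is_lattice_def by blast
  have mem: "l \<in> L \<longleftrightarrow> (\<exists>c. l = (\<Sum>b\<in>B. of_int (c b) *\<^sub>R b))" for l
    using L by blast
  show "0 \<in> L" unfolding mem by (rule exI[of _ "\<lambda>b. 0"]) simp
  show "a + b \<in> L" if "a \<in> L" "b \<in> L" for a b
  proof -
    from that obtain c d where "a = (\<Sum>b\<in>B. of_int (c b) *\<^sub>R b)" "b = (\<Sum>b\<in>B. of_int (d b) *\<^sub>R b)"
      unfolding mem by blast
    hence "a + b = (\<Sum>x\<in>B. of_int (c x + d x) *\<^sub>R x)" by (simp add: sum.distrib scaleR_left_distrib)
    thus ?thesis unfolding mem by (rule exI[where x = "\<lambda>x. c x + d x"])
  qed
  show "- a \<in> L" if "a \<in> L" for a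
  proof -
    from that obtain c where "a = (\<Sum>b\<in>B. of_int (c b) *\<^sub>R b)" unfolding mem by blast
    hence "- a = (\<Sum>x\<in>B. of_int (- c x) *\<^sub>R x)" by (simp add: sum_negf)
    thus ?thesis unfolding mem by (rule exI[where x = "\<lambda>x. - c x"])
  qed
  have "UNIV \<subseteq> span B"
    using card_eq_dim[of B UNIV] B by (simp add: Euclidean_Space.dim_UNIV)
  hence "span B = UNIV" by blast
  then obtain \<delta> where \<delta>: "\<delta> > 0"
    "\<And>c. norm (\<Sum>b\<in>B. of_int (c b) *\<^sub>R b) < \<delta> \<Longrightarrow> (\<Sum>b\<in>B. of_int (c b) *\<^sub>R b) = 0"
    using integer_combinations_discrete[OF B(1,2)] by blast
  show "\<exists>\<delta>>0. \<forall>l\<in>L. norm l < \<delta> \<longrightarrow> l = 0"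
  proof (intro exI[of _ \<delta>] conjI ballI impI)
    fix l assume "l \<in> L" "norm l < \<delta>"
    then obtain c where "l = (\<Sum>b\<in>B. of_int (c b) *\<^sub>R b)" "norm l < \<delta>" unfolding mem by blast
    thus "l = 0" using \<delta>(2)[of c] by simp
  qed (rule \<delta>(1))
qed

context discrete_lattice
begin

lemma diff_mem: "a \<in> L \<Longrightarrow> b \<in> L \<Longrightarrow> a - b \<in> L"
  using add_mem[of a "- b"] uminus_mem by simp

lemma sum_mem: "(\<And>i. i \<in> S \<Longrightarrow> f i \<in> L) \<Longrightarrow> (\<Sum>i\<in>S. f i) \<in> L"
  by (induct S rule: infinite_finite_induct) (simp_all add: zero_mem add_mem)

lemma of_nat_scale_mem: "l \<in> L \<Longrightarrow> of_nat n *s l \<in> L"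
  by (induct n) (simp_all add: zero_mem add_mem vec.scale_left_distrib)

lemma of_int_scale_mem:
  assumes l: "l \<in> L"
  shows "of_int m *s l \<in> L"
proof (cases m rule: int_cases)
  case (nonneg n) thus ?thesis using of_nat_scale_mem[OF l] by simp
next
  case (neg n)
  hence "of_int m *s l = - (of_nat (Suc n) *s l)"
    by (simp only: of_int_minus of_int_of_nat_eq vector_smult_lneg)
  thus ?thesis using uminus_mem[OF of_nat_scale_mem[OF l, of "Suc n"]] by (simp only:)
qed

lemma Ints_scale_mem: "c \<in> \<int> \<Longrightarrow> l \<in> L \<Longrightarrow> c *s l \<in> L"
  by (auto elim!: Ints_cases intro: of_int_scale_mem)

lemma tpt_mem: "x \<in> tpt L x" unfolding tpt_def using zero_mem by force

lemma tpt_eq_iff: "tpt L x = tpt L y \<longleftrightarrow> x - y \<in> L"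
proof
  assume "tpt L x = tpt L y"
  hence "x \<in> tpt L y" using tpt_mem by blast
  then obtain l where "l \<in> L" "x = y + l" unfolding tpt_def by blast
  thus "x - y \<in> L" by simp
next
  assume d: "x - y \<in> L"
  show "tpt L x = tpt L y"
  proof
    show "tpt L x \<subseteq> tpt L y"
    proof
      fix z assume "z \<in> tpt L x"
      then obtain l where l: "l \<in> L" "z = x + l" unfolding tpt_def by blast
      hence "z = y + ((x - y) + l)" by simp
      moreover have "(x - y) + l \<in> L" using add_mem d l by blast
      ultimately show "z \<in> tpt L y" unfolding tpt_def by blast
    qed
    show "tpt L y \<subseteq> tpt L x"
    proof
      fix z assume "z \<in> tpt L y"
      then obtain l where l: "l \<in> L" "z = y + l" unfolding tpt_def by blast
      hence "z = x + (l - (x - y))" by simp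
      moreover have "l - (x - y) \<in> L" using diff_mem d l by blast
      ultimately show "z \<in> tpt L x" unfolding tpt_def by blast
    qed
  qed
qed

lemma istopology_torus: "istopology (\<lambda>U. U \<subseteq> range (tpt L) \<and> open (tpt L -` U))"
  unfolding istopology_def by (auto simp: vimage_Union intro!: open_Union)

lemma openin_torus_top: "openin (torus_top L) U \<longleftrightarrow> U \<subseteq> range (tpt L) \<and> open (tpt L -` U)"
  unfolding torus_top_def using istopology_torus by simp

lemma topspace_torus_top: "topspace (torus_top L) = range (tpt L)"
proof -
  have "tpt L -` range (tpt L) = UNIV" by auto
  hence "openin (torus_top L) (range (tpt L))" by (simp add: openin_torus_top)
  hence "range (tpt L) \<subseteq> topspace (torus_top L)" by (rule openin_subset)
  moreover have "topspace (torus_top L) \<subseteq> range (tpt L)"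
    unfolding topspace_def using openin_torus_top by blast
  ultimately show ?thesis by blast
qed

lemma continuous_map_tpt: "continuous_map euclidean (torus_top L) (tpt L)"
  unfolding continuous_map_def topspace_torus_top
  by (auto simp: openin_torus_top vimage_def)

lemma openin_tpt_balls: "openin (torus_top L) (tpt L ` (\<Union>x\<in>A. ball x e))"
proof -
  have "tpt L -` (tpt L ` (\<Union>x\<in>A. ball x e)) = (\<Union>x\<in>A. \<Union>l\<in>L. ball (x + l) e)"
  proof (rule equalityI; rule subsetI)
    fix y assume "y \<in> tpt L -` (tpt L ` (\<Union>x\<in>A. ball x e))"
    then obtain x z where xz: "x \<in> A" "z \<in> ball x e" "tpt L y = tpt L z" by auto
    hence l: "y - z \<in> L" using tpt_eq_iff by blast
    have "dist (x + (y - z)) y = dist x z" by (simp add: dist_norm algebra_simps)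
    hence "y \<in> ball (x + (y - z)) e" using xz by simp
    thus "y \<in> (\<Union>x\<in>A. \<Union>l\<in>L. ball (x + l) e)" using xz l by blast
  next
    fix y assume "y \<in> (\<Union>x\<in>A. \<Union>l\<in>L. ball (x + l) e)"
    then obtain x l where xl: "x \<in> A" "l \<in> L" "y \<in> ball (x + l) e" by blast
    have "dist x (y - l) = dist (x + l) y" by (simp add: dist_norm algebra_simps)
    hence "y - l \<in> ball x e" using xl by simp
    moreover have "tpt L y = tpt L (y - l)" using tpt_eq_iff xl by simp
    ultimately show "y \<in> tpt L -` (tpt L ` (\<Union>x\<in>A. ball x e))" using xl by blast
  qed
  moreover have "open (\<Union>x\<in>A. \<Union>l\<in>L. ball (x + l) e)" by (intro open_UN ballI open_ball)
  ultimately show ?thesis by (simp add: openin_torus_top image_subset_iff)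
qed

context
  fixes S :: "(complex^'n) set set" and K :: "(complex^'n) set" and e :: real
  assumes S_range: "S \<subseteq> range (tpt L)" and K_S: "tpt L ` K \<subseteq> S" and e: "e > 0"
    and near: "\<And>x k b. tpt L x \<in> S \<Longrightarrow> k \<in> K \<Longrightarrow> norm b < e \<Longrightarrow> x - k - b \<in> L \<Longrightarrow> tpt L x \<in> tpt L ` K"
begin

lemma openin_tpt_image: "openin (subtopology (torus_top L) S) (tpt L ` K)"
proof -
  have "tpt L ` K = tpt L ` (\<Union>k\<in>K. ball k e) \<inter> S"
  proof
    show "tpt L ` K \<subseteq> tpt L ` (\<Union>k\<in>K. ball k e) \<inter> S" using K_S e by force
    show "tpt L ` (\<Union>k\<in>K. ball k e) \<inter> S \<subseteq> tpt L ` K"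
    proof
      fix w assume "w \<in> tpt L ` (\<Union>k\<in>K. ball k e) \<inter> S"
      then obtain k z where kz: "k \<in> K" "z \<in> ball k e" "w = tpt L z" "w \<in> S" by blast
      have "norm (z - k) < e" using kz by (simp add: dist_norm norm_minus_commute)
      thus "w \<in> tpt L ` K" using near[of z k "z - k"] kz zero_mem by simp
    qed
  qed
  thus ?thesis unfolding openin_subtopology using openin_tpt_balls[where A = K and e = e] by blast
qed

lemma closedin_tpt_image: "closedin (subtopology (torus_top L) S) (tpt L ` K)"
proof -
  define C where "C = tpt L ` K"
  define U where "U = (\<Union>x\<in>{x. tpt L x \<in> S - C}. ball x e)"
  have "S - C = tpt L ` U \<inter> S"
  proof
    show "S - C \<subseteq> tpt L ` U \<inter> S" using S_range e by (force simp: U_def)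
    show "tpt L ` U \<inter> S \<subseteq> S - C"
    proof
      fix w assume "w \<in> tpt L ` U \<inter> S"
      then obtain x z where xz: "tpt L x \<in> S" "tpt L x \<notin> C" "z \<in> ball x e" "w = tpt L z" "w \<in> S"
        by (auto simp: U_def)
      have "w \<notin> C"
      proof
        assume "w \<in> C"
        then obtain k where k: "k \<in> K" "w = tpt L k" unfolding C_def by blast
        hence "x - k - (x - z) \<in> L" using xz tpt_eq_iff by simp
        moreover have "norm (x - z) < e" using xz by (simp add: dist_norm)
        ultimately have "tpt L x \<in> C" unfolding C_def using near[of x k "x - z"] xz k by blast
        thus False using xz by blast
      qed
      thus "w \<in> S - C" using xz by blast
    qed
  qed
  hence "openin (subtopology (torus_top L) S) (S - C)"
    unfolding openin_subtopology U_def using openin_tpt_balls[where A = "{x. tpt L x \<in> S - C}" and e = e]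
    by blast
  moreover have "topspace (subtopology (torus_top L) S) = S"
    using S_range topspace_torus_top by auto
  ultimately show ?thesis unfolding closedin_def C_def using K_S by simp
qed

end

lemma connected_component_tpt_image:
  assumes "connected K" "0 \<in> K" "S \<subseteq> range (tpt L)" "tpt L ` K \<subseteq> S" "e > 0"
    and near: "\<And>x k b. tpt L x \<in> S \<Longrightarrow> k \<in> K \<Longrightarrow> norm b < e \<Longrightarrow> x - k - b \<in> L \<Longrightarrow> tpt L x \<in> tpt L ` K"
  shows "connected_component_of_set (subtopology (torus_top L) S) (tpt L 0) = tpt L ` K"
proof (rule connected_component_of_clopen)
  show "connectedin (subtopology (torus_top L) S) (tpt L ` K)"
    unfolding connectedin_subtopology
    using connectedin_continuous_map_image[OF continuous_map_tpt] assms(1,4) by simp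
qed (use assms openin_tpt_image[OF assms(3-5) near] closedin_tpt_image[OF assms(3-5) near] in auto)

lemma bounded_linear_vanish_near_zero:
  fixes f :: "'i \<Rightarrow> 'a::real_normed_vector \<Rightarrow> complex^'n"
  assumes I: "finite I" and lin: "\<And>i. i \<in> I \<Longrightarrow> bounded_linear (f i)"
  obtains e where "e > 0" "\<And>i b. i \<in> I \<Longrightarrow> norm b < e \<Longrightarrow> f i b \<in> L \<Longrightarrow> f i b = 0"
proof -
  obtain \<delta> where \<delta>: "\<delta> > 0" "\<And>l. l \<in> L \<Longrightarrow> norm l < \<delta> \<Longrightarrow> l = 0" using discrete by blast
  obtain K where K: "K > 0" "\<And>i x. i \<in> I \<Longrightarrow> norm (f i x) \<le> norm x * K"
    using uniform_bound_bounded_linear[of I f, OF I lin] by blast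
  show ?thesis
  proof (rule that[of "\<delta> / K"])
    show "\<delta> / K > 0" using \<delta>(1) K(1) by simp
    fix i b assume i: "i \<in> I" and b: "norm b < \<delta> / K" and fb: "f i b \<in> L"
    have "norm (f i b) < \<delta>"
      using K(2)[OF i, of b] b K(1) by (simp add: field_simps)
    thus "f i b = 0" using \<delta>(2) fb by blast
  qed
qed

end

section \<open>The action on the complex torus\<close>

locale spherical_action = spherical_rep G H \<rho> + discrete_lattice L
  for G :: "('g, 'b) monoid_scheme" (structure) and H and \<rho> :: "'g \<Rightarrow> complex^'m^'m"
    and L :: "(complex^'n) set" +
  fixes M :: "'g \<Rightarrow> complex^'n^'n"
  assumes M_rep: "is_rep G M"
    and M_lattice: "\<And>g l. g \<in> carrier G \<Longrightarrow> l \<in> L \<Longrightarrow> M g *v l \<in> L"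
    and rational_character: "\<forall>g\<in>carrier G. character \<rho> g \<in> \<rat>"
begin

lemma grp_alg_map_Ints_mem:
  assumes a: "\<And>g. g \<in> carrier G \<Longrightarrow> a g \<in> \<int>" and l: "l \<in> L"
  shows "grp_alg_map G M a l \<in> L"
  unfolding grp_alg_map_def using a M_lattice[OF _ l] by (intro sum_mem Ints_scale_mem) auto

lemma av_image_grp_alg_map:
  assumes a: "\<And>g. g \<in> carrier G \<Longrightarrow> a g \<in> \<rat>"
  shows "av_image L (grp_alg_map G M a) = tpt L ` range (grp_alg_map G M a)"
proof -
  obtain N :: int where N: "N > 0" "\<forall>g\<in>carrier G. of_int N * a g \<in> \<int>"
    using Rats_common_denominator[OF finite_carrier, of a] a by blast
  have "of_nat (nat N) *s grp_alg_map G M a l \<in> L" if "l \<in> L" for l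
    using N that by (simp add: grp_alg_map_coeff_scale[symmetric] grp_alg_map_Ints_mem)
  hence "\<exists>n. n > 0 \<and> (\<forall>l\<in>L. of_nat n *s grp_alg_map G M a l \<in> L)"
    using N(1) by (intro exI[of _ "nat N"]) simp
  hence "end_denom L (grp_alg_map G M a) > 0" unfolding end_denom_def by (rule LeastI2_ex) blast
  hence n: "(of_nat (end_denom L (grp_alg_map G M a)) :: complex) \<noteq> 0" by simp
  have "range (\<lambda>x. of_nat (end_denom L (grp_alg_map G M a)) *s grp_alg_map G M a x)
      = range (grp_alg_map G M a)" (is "range (\<lambda>x. ?n *s _) = _")
  proof
    show "range (\<lambda>x. ?n *s grp_alg_map G M a x) \<subseteq> range (grp_alg_map G M a)"
      by (auto simp: grp_alg_map_scale[symmetric])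
    show "range (grp_alg_map G M a) \<subseteq> range (\<lambda>x. ?n *s grp_alg_map G M a x)"
    proof
      fix y assume "y \<in> range (grp_alg_map G M a)"
      then obtain x where "y = grp_alg_map G M a x" by blast
      hence "y = ?n *s grp_alg_map G M a ((1 / ?n) *s x)" using n by (simp add: grp_alg_map_scale)
      thus "y \<in> range (\<lambda>x. ?n *s grp_alg_map G M a x)" by blast
    qed
  qed
  thus ?thesis by (simp add: av_image_def)
qed

lemma avg_map_lattice:
  assumes D: "D \<in> double_cosets G H" and l: "l \<in> L" and fixed: "avg_map G M H H l = l"
  shows "avg_map G M H D l \<in> L"
proof -
  obtain T where T: "T \<subseteq> D" "\<And>f :: 'g \<Rightarrow> complex^'n. (\<Sum>y\<in>D. f y) = (\<Sum>t\<in>T. \<Sum>h\<in>H. f (t \<otimes> h))"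
    using left_coset_transversal[OF double_cosets_subset_carrier[OF D] double_cosets_rmult[OF D]]
    by blast
  have Tc: "t \<in> carrier G" if "t \<in> T" for t using that T(1) double_cosets_subset_carrier[OF D] by blast
  have "(\<Sum>h\<in>H. M (t \<otimes> h) *v l) = of_nat (card H) *s (M t *v l)" if t: "t \<in> T" for t
  proof -
    have "M (t \<otimes> h) *v l = M t *v l" if "h \<in> H" for h
      using rep_mult_pH[OF M_rep that, of l] fixed Tc[OF t] H_carrier[OF that]
      by (simp add: rep_mult_vec[OF M_rep, symmetric])
    hence "(\<Sum>h\<in>H. M (t \<otimes> h) *v l) = (\<Sum>h\<in>H. M t *v l)" by (rule sum.cong[OF refl])
    thus ?thesis by (simp only: sum_constant_scale)
  qed
  hence "(\<Sum>y\<in>D. M y *v l) = (\<Sum>t\<in>T. of_nat (card H) *s (M t *v l))"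
    by (simp only: T(2)[of "\<lambda>y. M y *v l"] cong: sum.cong)
  hence "avg_map G M H D l = (1 / of_nat (card H)) *s (\<Sum>t\<in>T. of_nat (card H) *s (M t *v l))"
    by (simp add: avg_map_eq grp_alg_map_avg_coeff double_cosets_subset_carrier[OF D])
  also have "\<dots> = (\<Sum>t\<in>T. M t *v l)"
    using card_H_pos by (simp add: vec.scale_sum_right vec.scale_scale)
  also have "\<dots> \<in> L" using Tc M_lattice[OF _ l] by (intro sum_mem) blast
  finally show ?thesis .
qed

definition eigen_locus :: "(complex^'n) set" where
  "eigen_locus = {x. \<forall>D\<in>double_cosets G H. avg_map G M H D x = chi_avg \<rho> H D *s x}"

lemma eigen_locus_pH: "x \<in> eigen_locus \<Longrightarrow> avg_map G M H H x = x"
  using subgroup_in_double_cosets by (auto simp: eigen_locus_def chi_avg_subgroup)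

lemma convex_eigen_locus: "convex eigen_locus"
  unfolding convex_def eigen_locus_def
  by (simp add: cscale_real[symmetric] avg_map_eq grp_alg_map_add grp_alg_map_scale
      vec.scale_right_distrib vec.scale_scale mult.commute)

lemma range_pH_eW: "range (\<lambda>x. avg_map G M H H (grp_alg_map G M (eW_coeff \<rho>) x)) = eigen_locus"
proof
  show "range (\<lambda>x. avg_map G M H H (grp_alg_map G M (eW_coeff \<rho>) x)) \<subseteq> eigen_locus"
    using avg_map_pH_eW[OF M_rep] by (auto simp: eigen_locus_def)
  show "eigen_locus \<subseteq> range (\<lambda>x. avg_map G M H H (grp_alg_map G M (eW_coeff \<rho>) x))"
  proof
    fix x assume "x \<in> eigen_locus"
    hence "avg_map G M H H (grp_alg_map G M (eW_coeff \<rho>) x) = x"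
      by (intro pH_eW_on_eigenvectors[OF M_rep]) (auto simp: eigen_locus_def)
    thus "x \<in> range (\<lambda>x. avg_map G M H H (grp_alg_map G M (eW_coeff \<rho>) x))" by (metis rangeI)
  qed
qed

lemma av_image_pH_eW: "av_image L (avg_map G M H H \<circ> eW_map G M \<rho>) = tpt L ` eigen_locus"
proof -
  have comp: "avg_map G M H H \<circ> eW_map G M \<rho> = grp_alg_map G M (convolution (avg_coeff H) (eW_coeff \<rho>))"
    by (rule ext) (simp add: avg_map_eq eW_map_eq grp_alg_map_convolution[OF M_rep])
  have "convolution (avg_coeff H) (eW_coeff \<rho>) g \<in> \<rat>" if "g \<in> carrier G" for g
    using that rational_character
    by (auto simp: convolution_def avg_coeff_def eW_coeff_def intro!: Rats_sum Rats_mult Rats_divide)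
  hence "av_image L (avg_map G M H H \<circ> eW_map G M \<rho>)
      = tpt L ` range (avg_map G M H H \<circ> eW_map G M \<rho>)"
    unfolding comp by (rule av_image_grp_alg_map)
  also have "range (avg_map G M H H \<circ> eW_map G M \<rho>) = eigen_locus"
    using range_pH_eW by (simp add: comp_def eW_map_eq)
  finally show ?thesis .
qed

lemma av_image_pH: "av_image L (avg_map G M H H) = tpt L ` range (avg_map G M H H)"
  unfolding avg_map_eq by (rule av_image_grp_alg_map) (simp add: avg_coeff_def)

lemma eigen_locus_add: "x \<in> eigen_locus \<Longrightarrow> y \<in> eigen_locus \<Longrightarrow> x + y \<in> eigen_locus"
  by (simp add: eigen_locus_def avg_map_eq grp_alg_map_add vec.scale_right_distrib)

definition eigen_defect :: "'g set \<Rightarrow> complex^'n \<Rightarrow> complex^'n" where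
  "eigen_defect D y = of_nat (card H) *s (avg_map G M H D y - chi_avg \<rho> H D *s y)"

lemma eigen_defect_eq_0_iff: "eigen_defect D y = 0 \<longleftrightarrow> avg_map G M H D y = chi_avg \<rho> H D *s y"
  unfolding eigen_defect_def vec.scale_eq_0_iff using card_H_pos by simp

lemma eigen_defect_diff: "eigen_defect D (x - y) = eigen_defect D x - eigen_defect D y"
  by (simp add: eigen_defect_def avg_map_eq grp_alg_map_diff vec.scale_right_diff_distrib algebra_simps)

lemma bounded_linear_eigen_defect: "bounded_linear (eigen_defect D)"
  by (rule complex_linear_imp_bounded_linear)
    (simp_all add: eigen_defect_def avg_map_eq grp_alg_map_add grp_alg_map_scale vec.scale_scale
      vec.scale_right_distrib vec.scale_right_diff_distrib algebra_simps)

lemma eigen_defect_lattice: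
  assumes D: "D \<in> double_cosets G H" and l: "l \<in> L"
  shows "eigen_defect D l \<in> L"
proof -
  have "eigen_defect D l = grp_alg_map G M (\<lambda>g. of_nat (card H) * avg_coeff D g) l
      - (of_nat (card H) * chi_avg \<rho> H D) *s l"
    by (simp add: eigen_defect_def avg_map_eq grp_alg_map_coeff_scale vec.scale_right_diff_distrib
        vec.scale_scale)
  also have "\<dots> \<in> L"
    using card_H_pos chi_avg_Ints[OF rational_character D]
    by (intro diff_mem grp_alg_map_Ints_mem Ints_scale_mem l) (auto simp: avg_coeff_def)
  finally show ?thesis .
qed

definition eigen_points :: "(complex^'n) set set" where
  "eigen_points = {z \<in> av_image L (avg_map G M H H). \<forall>D\<in>double_cosets G H.
     \<exists>x\<in>range (avg_map G M H H). z = tpt L x \<and> tpt L (avg_map G M H D x) = tpt L (chi_avg \<rho> H D *s x)}"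

lemma eigen_points_defect:
  assumes z: "tpt L x0 \<in> eigen_points" and D: "D \<in> double_cosets G H"
  shows "eigen_defect D x0 \<in> L"
proof -
  obtain x where x: "tpt L x0 = tpt L x" "tpt L (avg_map G M H D x) = tpt L (chi_avg \<rho> H D *s x)"
    using z D unfolding eigen_points_def by blast
  have "avg_map G M H D x - chi_avg \<rho> H D *s x \<in> L" using x(2) tpt_eq_iff by blast
  hence "eigen_defect D x \<in> L" unfolding eigen_defect_def by (rule of_nat_scale_mem)
  moreover have "eigen_defect D (x0 - x) \<in> L" using x(1) tpt_eq_iff eigen_defect_lattice[OF D] by simp
  ultimately show ?thesis using add_mem[of "eigen_defect D x0 - eigen_defect D x" "eigen_defect D x"]
    by (simp add: eigen_defect_diff)
qed

lemma eigen_points_near_eigen_locus: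
  assumes small: "\<And>D b. D \<in> double_cosets G H \<Longrightarrow> norm b < e \<Longrightarrow> eigen_defect D b \<in> L
      \<Longrightarrow> eigen_defect D b = 0"
    and x: "tpt L x \<in> eigen_points" and k: "k \<in> eigen_locus" and b: "norm b < e"
    and xkb: "x - k - b \<in> L"
  shows "tpt L x \<in> tpt L ` eigen_locus"
proof -
  obtain x0 where x0: "tpt L x = tpt L x0" "x0 \<in> range (avg_map G M H H)"
    using x unfolding eigen_points_def av_image_pH by blast
  have x0_points: "tpt L x0 \<in> eigen_points" using x x0(1) by simp
  define l where "l = x0 - k - b"
  have "l = (x - k - b) - (x - x0)" by (simp add: l_def)
  hence l: "l \<in> L" using diff_mem[OF xkb, of "x - x0"] x0(1) tpt_eq_iff by simp
  have "eigen_defect D b = 0" if D: "D \<in> double_cosets G H" for D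
  proof -
    have "eigen_defect D k = 0" using k D by (simp add: eigen_locus_def eigen_defect_eq_0_iff)
    hence "eigen_defect D b = eigen_defect D x0 - eigen_defect D l"
      by (simp add: l_def eigen_defect_diff)
    hence "eigen_defect D b \<in> L"
      using diff_mem eigen_points_defect[OF x0_points D] eigen_defect_lattice[OF D l] by simp
    thus ?thesis using small[OF D b] by blast
  qed
  hence "k + b \<in> eigen_locus"
    using eigen_locus_add[OF k] by (simp add: eigen_locus_def eigen_defect_eq_0_iff)
  moreover have "tpt L x = tpt L (k + b)"
    using add_mem[OF xkb zero_mem] tpt_eq_iff by (simp add: algebra_simps)
  ultimately show ?thesis by blast
qed

lemma eigen_points_component:
  "connected_component_of_set (subtopology (torus_top L) eigen_points) (tpt L 0) = tpt L ` eigen_locus"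
proof -
  obtain e where e: "e > 0"
    "\<And>D b. D \<in> double_cosets G H \<Longrightarrow> norm b < e \<Longrightarrow> eigen_defect D b \<in> L \<Longrightarrow> eigen_defect D b = 0"
    using bounded_linear_vanish_near_zero[of "double_cosets G H" eigen_defect,
        OF finite_double_cosets bounded_linear_eigen_defect] by blast
  have "0 \<in> eigen_locus" by (simp add: eigen_locus_def avg_map_eq grp_alg_map_zero)
  moreover have "eigen_points \<subseteq> range (tpt L)" by (auto simp: eigen_points_def av_image_def)
  moreover have "tpt L ` eigen_locus \<subseteq> eigen_points"
  proof
    fix z assume "z \<in> tpt L ` eigen_locus"
    then obtain k where k: "k \<in> eigen_locus" "z = tpt L k" by blast
    hence "k \<in> range (avg_map G M H H)" using eigen_locus_pH range_pH_iff[OF M_rep] by blast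
    thus "z \<in> eigen_points"
      using k by (auto simp: eigen_points_def av_image_pH eigen_locus_def)
  qed
  ultimately show ?thesis
    by (rule connected_component_tpt_image[OF convex_connected[OF convex_eigen_locus] _ _ _ e(1)
          eigen_points_near_eigen_locus[OF e(2)]])
qed

end

theorem theorem4p3:
  fixes G :: "('g, 'b) monoid_scheme"
    and H :: "'g set"
    and L :: "(complex^'n) set"
    and M :: "'g \<Rightarrow> complex^'n^'n"
    and \<rho> :: "'g \<Rightarrow> complex^'m^'m"
  assumes "group G" and "finite (carrier G)"
    and "abelian_variety L"
    and "group_acts_on_av G L M"
    and "subgroup H G"
    and "irreducible_rep G \<rho>"
    and "vec.dim (fixed_space H \<rho>) = 1"
    and "\<forall>g\<in>carrier G. character \<rho> g \<in> \<rat>"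
  shows "(\<forall>D\<in>double_cosets G H. chi_avg \<rho> H D \<in> \<int>)
       \<and> (\<forall>D\<in>double_cosets G H.
            avg_map G M H D ` range (avg_map G M H H) \<subseteq> range (avg_map G M H H)
          \<and> (\<forall>l\<in>L \<inter> range (avg_map G M H H). avg_map G M H D l \<in> L))
       \<and> av_image L (avg_map G M H H \<circ> eW_map G M \<rho>) =
           connected_component_of_set
             (subtopology (torus_top L)
                {z \<in> av_image L (avg_map G M H H). \<forall>D\<in>double_cosets G H.
                    \<exists>x\<in>range (avg_map G M H H).
                      z = tpt L x \<and> tpt L (avg_map G M H D x) = tpt L (chi_avg \<rho> H D *s x)})
             (tpt L 0)"
proof -
  have lattice: "discrete_lattice L"
    using assms(3) is_lattice_imp_discrete_lattice unfolding abelian_variety_def by blast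
  have M: "is_rep G M" "\<And>g l. g \<in> carrier G \<Longrightarrow> l \<in> L \<Longrightarrow> M g *v l \<in> L"
    using assms(4) unfolding group_acts_on_av_def is_rep_def by auto
  have "finite_subgroup G H"
    using assms(1,2,5) by (simp add: finite_subgroup_def finite_subgroup_axioms_def
        finite_group_def finite_group_axioms_def)
  hence "spherical_rep G H \<rho>"
    using assms(6,7) by (simp add: spherical_rep_def spherical_rep_axioms_def)
  then interpret spherical_action G H \<rho> L M
    using lattice M assms(8) by (simp add: spherical_action_def spherical_action_axioms_def)
  have "\<forall>D\<in>double_cosets G H.
          avg_map G M H D ` range (avg_map G M H H) \<subseteq> range (avg_map G M H H)
        \<and> (\<forall>l\<in>L \<inter> range (avg_map G M H H). avg_map G M H D l \<in> L)"
    using avg_map_range_pH[OF M_rep] avg_map_lattice range_pH_iff[OF M_rep] by blast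
  thus ?thesis
    using chi_avg_Ints[OF rational_character] av_image_pH_eW eigen_points_component
    by (simp add: eigen_points_def)
qed

end
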